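(* Let $(A,\mu,E,\Delta,\epsilon)$ be a regular weak multiplier bialgebra over a field. Then for all $a,b\in A$: (1) if $T_3(a\otimes b)=\sum_i x_i\otimes y_i$ then $\sum_i y_i\,\overline\sqcap^L(x_i)=ba$; (2) if $T_4(a\otimes b)=\sum_i x_i\otimes y_i$ then $\sum_i \overline\sqcap^R(y_i)\,x_i=ba$; (3) if $T_1(a\otimes b)=\sum_i x_i\otimes y_i$ then $\sum_i \sqcap^L(x_i)\,y_i=ab$; (4) if $T_2(a\otimes b)=\sum_i x_i\otimes y_i$ then $\sum_i x_i\,\sqcap^R(y_i)=ab$. (That is, $\mu^{\mathrm{op}}(\overline\sqcap^L\otimes\mathrm{id})T_3=\mu^{\mathrm{op}}$, $\mu^{\mathrm{op}}(\mathrm{id}\otimes\overline\sqcap^R)T_4=\mu^{\mathrm{op}}$, $\mu(\sqcap^L\otimes\mathrm{id})T_1=\mu$, $\mu(\mathrm{id}\otimes\sqcap^R)T_2=\mu$, with $\mu^{\mathrm{op}}(x\otimes y)=yx$.)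
   Context: Let $k$ be a field. A non-unital $k$-algebra $A$ is idempotent if its multiplication $\mu$ is surjective and has non-degenerate multiplication if ($ab=0\ \forall a$)$\Rightarrow b=0$ and ($ba=0\ \forall a$)$\Rightarrow b=0$. $\mathbb M(A)$ is its multiplier algebra (pairs $(\lambda,\rho)$ of linear maps $A\to A$ with $a\lambda(b)=\rho(a)b$), a unital algebra containing $A$ as a dense ideal; $A\otimes A\subseteq\mathbb M(A\otimes A)$. Multiplicative $\gamma:A\to\mathbb M(B)$ with idempotent $e\in\mathbb M(B)$, $\langle\gamma(a)b\rangle=eB$, $\langle b\gamma(a)\rangle=Be$ ($\langle\,\rangle$=span) extends uniquely to multiplicative $\overline\gamma:\mathbb M(A)\to\mathbb M(B)$ with $\overline\gamma(1)=e$. A weak multiplier bialgebra: idempotent $A$ with non-degenerate multiplication, idempotent $E\in\mathbb M(A\otimes A)$, multiplicative linear $\Delta:A\to\mathbb M(A\otimes A)$, linear $\epsilon:A\to k$ with: (i) $T_1(a\otimes b):=\Delta(a)(1\otimes b)$, $T_2(a\otimes b):=(a\otimes1)\Delta(b)$ lie in $A\otimes A$; (ii) $(T_2\otimes\mathrm{id})(\mathrm{id}\otimes T_1)=(\mathrm{id}\otimes T_1)(T_2\otimes\mathrm{id})$; (iii) $(\epsilon\otimes\mathrm{id})T_1=\mu=(\mathrm{id}\otimes\epsilon)T_2$; (iv) $\langle\Delta(a)(b\otimes b')\rangle=\langle E(b\otimes b')\rangle$, $\langle(b\otimes b')\Delta(a)\rangle=\langle(b\otimes b')E\rangle$; (v)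 $(E\otimes1)(1\otimes E)=E^{(3)}=(1\otimes E)(E\otimes1)$ with $E^{(3)}:=(\overline{\mathrm{id}\otimes\Delta})(E)=(\overline{\Delta\otimes\mathrm{id}})(E)$; (vi) $(\epsilon\otimes\mathrm{id})((1\otimes a)E(b\otimes c))=(\epsilon\otimes\mathrm{id})(\Delta(a)(b\otimes c))$ and $(\epsilon\otimes\mathrm{id})((a\otimes b)E(1\otimes c))=(\epsilon\otimes\mathrm{id})((a\otimes b)\Delta(c))$. It is regular if moreover $T_3(a\otimes b):=(1\otimes b)\Delta(a)$ and $T_4(a\otimes b):=\Delta(b)(a\otimes1)$ lie in $A\otimes A$ for all $a,b$. For $a\in A$ define multipliers: $\overline\sqcap^L(a)$ by $\overline\sqcap^L(a)b=(\epsilon\otimes\mathrm{id})((a\otimes1)\Delta(b))$, $b\overline\sqcap^L(a)=(\epsilon\otimes\mathrm{id})((a\otimes b)E)$; $\overline\sqcap^R(a)$ by $b\overline\sqcap^R(a)=(\mathrm{id}\otimes\epsilon)(\Delta(b)(1\otimes a))$, $\overline\sqcap^R(a)b=(\mathrm{id}\otimes\epsilon)(E(b\otimes a))$; $\sqcap^L(a)$ by $\sqcap^L(a)b=(\epsilon\otimes\mathrm{id})(E(a\otimes b))$, $b\sqcap^L(a)=(\epsilon\otimes\mathrm{id})(\Delta(b)(a\otimes1))$; $\sqcap^R(a)$ by $b\sqcap^R(a)=(\mathrm{id}\otimes\epsilon)((b\otimes a)E)$, $\sqcap^R(a)b=(\mathrm{id}\otimes\epsilon)((1\otimes a)\Delta(b))$.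 *)

theory Defs
  imports Main "HOL.Vector_Spaces" "HOL-Library.Function_Algebras"
begin

text \<open>The non-unital k-algebra A is a type 'a of class ring (Isabelle's ring has no unit),
  the field k is a type 'k of class field, and sc is the scalar multiplication.
  Tensor powers of A are represented faithfully (over a field) by their canonical
  image in the k-valued multilinear forms on tuples of linear functionals on A:
  the elementary tensor a1 x ... x an is the function sending a list of linear
  functionals [f1,...,fn] to f1 a1 * ... * fn an (and everything else to 0).\<close>

type_synonym ('a,'k) tens = "('a \<Rightarrow> 'k) list \<Rightarrow> 'k"
type_synonym ('a,'k) mlt = "(('a,'k) tens \<Rightarrow> ('a,'k) tens) \<times> (('a,'k) tens \<Rightarrow> ('a,'k) tens)"

definition algebra_over :: "('k::field \<Rightarrow> 'a::ring \<Rightarrow> 'a) \<Rightarrow> bool" where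
  "algebra_over sc \<longleftrightarrow> Vector_Spaces.vector_space sc \<and>
     (\<forall>c a b. sc c (a * b) = sc c a * b \<and> sc c (a * b) = a * sc c b)"

definition lin_fun :: "('k::field \<Rightarrow> 'a::ring \<Rightarrow> 'a) \<Rightarrow> ('a \<Rightarrow> 'k) \<Rightarrow> bool" where
  "lin_fun sc f \<longleftrightarrow> Vector_Spaces.linear sc (*) f"

definition etens :: "('k::field \<Rightarrow> 'a::ring \<Rightarrow> 'a) \<Rightarrow> 'a list \<Rightarrow> ('a,'k) tens" where
  "etens sc as = (\<lambda>fs. if length fs = length as \<and> (\<forall>f\<in>set fs. lin_fun sc f)
                        then prod_list (map2 (\<lambda>f a. f a) fs as) else 0)"

definition tsum :: "('k::field \<Rightarrow> 'a::ring \<Rightarrow> 'a) \<Rightarrow> 'a list list \<Rightarrow> ('a,'k) tens" where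
  "tsum sc xs = (\<lambda>fs. sum_list (map (\<lambda>as. etens sc as fs) xs))"

definition T :: "('k::field \<Rightarrow> 'a::ring \<Rightarrow> 'a) \<Rightarrow> nat \<Rightarrow> ('a,'k) tens set" where
  "T sc n = {t. \<exists>xs. (\<forall>as\<in>set xs. length as = n) \<and> t = tsum sc xs}"

definition tscale :: "'k::field \<Rightarrow> ('a,'k) tens \<Rightarrow> ('a,'k) tens" where
  "tscale c t = (\<lambda>fs. c * t fs)"

definition tspan :: "('a,'k::field) tens set \<Rightarrow> ('a,'k) tens set" where
  "tspan S = {x. \<exists>cs. set (map snd cs) \<subseteq> S \<and> x = sum_list (map (\<lambda>(c,s). tscale c s) cs)}"

definition rep :: "('k::field \<Rightarrow> 'a::ring \<Rightarrow> 'a) \<Rightarrow> nat \<Rightarrow> ('a,'k) tens \<Rightarrow> 'a list list" where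
  "rep sc n t = (SOME xs. (\<forall>as\<in>set xs. length as = n) \<and> t = tsum sc xs)"

definition tmul :: "('k::field \<Rightarrow> 'a::ring \<Rightarrow> 'a) \<Rightarrow> nat \<Rightarrow> ('a,'k) tens \<Rightarrow> ('a,'k) tens \<Rightarrow> ('a,'k) tens" where
  "tmul sc n s t = tsum sc [map2 (*) as bs. as \<leftarrow> rep sc n s, bs \<leftarrow> rep sc n t]"

text \<open>Tensor product of a degree-k tensor with another tensor (concatenation).\<close>
definition tcat :: "nat \<Rightarrow> ('a,'k::field) tens \<Rightarrow> ('a,'k) tens \<Rightarrow> ('a,'k) tens" where
  "tcat k s t = (\<lambda>fs. s (take k fs) * t (drop k fs))"

text \<open>A multiplier is a pair (lambda, rho) of linear maps with x lambda(y) = rho(x) y;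
  lambda is the left action m y, rho the right action x m. Maps are normalised to be 0
  outside the carrier so that equality of multipliers is equality of pairs.\<close>
definition M :: "('k::field \<Rightarrow> 'a::ring \<Rightarrow> 'a) \<Rightarrow> nat \<Rightarrow> ('a,'k) mlt set" where
  "M sc n = {(L,R). (\<forall>x\<in>T sc n. L x \<in> T sc n \<and> R x \<in> T sc n)
     \<and> (\<forall>x. x \<notin> T sc n \<longrightarrow> L x = 0 \<and> R x = 0)
     \<and> (\<forall>c x y. x \<in> T sc n \<longrightarrow> y \<in> T sc n \<longrightarrow>
           L (tscale c x + y) = tscale c (L x) + L y \<and> R (tscale c x + y) = tscale c (R x) + R y)
     \<and> (\<forall>x\<in>T sc n. \<forall>y\<in>T sc n. tmul sc n x (L y) = tmul sc n (R x) y)}"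

definition emb :: "('k::field \<Rightarrow> 'a::ring \<Rightarrow> 'a) \<Rightarrow> nat \<Rightarrow> ('a,'k) tens \<Rightarrow> ('a,'k) mlt" where
  "emb sc n t = (\<lambda>x. if x \<in> T sc n then tmul sc n t x else 0,
                 \<lambda>x. if x \<in> T sc n then tmul sc n x t else 0)"

definition mmul :: "('k::field \<Rightarrow> 'a::ring \<Rightarrow> 'a) \<Rightarrow> nat \<Rightarrow> ('a,'k) mlt \<Rightarrow> ('a,'k) mlt \<Rightarrow> ('a,'k) mlt" where
  "mmul sc n m m' = (\<lambda>x. if x \<in> T sc n then fst m (fst m' x) else 0,
                     \<lambda>x. if x \<in> T sc n then snd m' (snd m x) else 0)"

definition munit :: "('k::field \<Rightarrow> 'a::ring \<Rightarrow> 'a) \<Rightarrow> nat \<Rightarrow> ('a,'k) mlt" where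
  "munit sc n = (\<lambda>x. if x \<in> T sc n then x else 0, \<lambda>x. if x \<in> T sc n then x else 0)"

definition mzero :: "('a,'k::field) mlt" where
  "mzero = (\<lambda>x. 0, \<lambda>x. 0)"

definition msum :: "('a,'k::field) mlt list \<Rightarrow> ('a,'k) mlt" where
  "msum ms = (\<lambda>x. sum_list (map (\<lambda>m. fst m x) ms), \<lambda>x. sum_list (map (\<lambda>m. snd m x) ms))"

text \<open>Multipliers given by patterns of elements of A and units 1, e.g.
  [None, Some b] is the multiplier 1 x b of A x A.\<close>
definition pmulL :: "'a::ring option \<Rightarrow> 'a \<Rightarrow> 'a" where
  "pmulL p a = (case p of None \<Rightarrow> a | Some b \<Rightarrow> b * a)"
definition pmulR :: "'a::ring option \<Rightarrow> 'a \<Rightarrow> 'a" where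
  "pmulR p a = (case p of None \<Rightarrow> a | Some b \<Rightarrow> a * b)"

definition pm :: "('k::field \<Rightarrow> 'a::ring \<Rightarrow> 'a) \<Rightarrow> nat \<Rightarrow> 'a option list \<Rightarrow> ('a,'k) mlt" where
  "pm sc n ps = (\<lambda>x. if x \<in> T sc n then tsum sc (map (map2 pmulL ps) (rep sc n x)) else 0,
                 \<lambda>x. if x \<in> T sc n then tsum sc (map (map2 pmulR ps) (rep sc n x)) else 0)"

text \<open>F x id (F acting on the first k factors) and id x F (F acting on the factors after the k-th)
  as maps on the n-fold tensor power.\<close>
definition liftL :: "('k::field \<Rightarrow> 'a::ring \<Rightarrow> 'a) \<Rightarrow> nat \<Rightarrow> nat \<Rightarrow> (('a,'k) tens \<Rightarrow> ('a,'k) tens) \<Rightarrow> ('a,'k) tens \<Rightarrow> ('a,'k) tens" where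
  "liftL sc k n F x = sum_list (map (\<lambda>as. tcat k (F (etens sc (take k as))) (etens sc (drop k as))) (rep sc n x))"
definition liftR :: "('k::field \<Rightarrow> 'a::ring \<Rightarrow> 'a) \<Rightarrow> nat \<Rightarrow> nat \<Rightarrow> (('a,'k) tens \<Rightarrow> ('a,'k) tens) \<Rightarrow> ('a,'k) tens \<Rightarrow> ('a,'k) tens" where
  "liftR sc k n F x = sum_list (map (\<lambda>as. tcat k (etens sc (take k as)) (F (etens sc (drop k as)))) (rep sc n x))"

text \<open>m x 1 and 1 x m for a multiplier m.\<close>
definition mliftL :: "('k::field \<Rightarrow> 'a::ring \<Rightarrow> 'a) \<Rightarrow> nat \<Rightarrow> nat \<Rightarrow> ('a,'k) mlt \<Rightarrow> ('a,'k) mlt" where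
  "mliftL sc k n m = (\<lambda>x. if x \<in> T sc n then liftL sc k n (fst m) x else 0,
                      \<lambda>x. if x \<in> T sc n then liftL sc k n (snd m) x else 0)"
definition mliftR :: "('k::field \<Rightarrow> 'a::ring \<Rightarrow> 'a) \<Rightarrow> nat \<Rightarrow> nat \<Rightarrow> ('a,'k) mlt \<Rightarrow> ('a,'k) mlt" where
  "mliftR sc k n m = (\<lambda>x. if x \<in> T sc n then liftR sc k n (fst m) x else 0,
                      \<lambda>x. if x \<in> T sc n then liftR sc k n (snd m) x else 0)"

text \<open>The unique multiplicative extension gamma-bar : M(A x A) -> M(A x A x A) of
  gamma : A x A -> M(A x A x A) with gamma-bar(1) = e (normalised to 0 off M(A x A)).\<close>
definition ext :: "('k::field \<Rightarrow> 'a::ring \<Rightarrow> 'a) \<Rightarrow> (('a,'k) tens \<Rightarrow> ('a,'k) mlt) \<Rightarrow> ('a,'k) mlt \<Rightarrow> ('a,'k) mlt \<Rightarrow> ('a,'k) mlt" where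
  "ext sc \<gamma> e = (THE \<Gamma>. (\<forall>m\<in>M sc 2. \<Gamma> m \<in> M sc 3)
       \<and> (\<forall>m\<in>M sc 2. \<forall>m'\<in>M sc 2. \<Gamma> (mmul sc 2 m m') = mmul sc 3 (\<Gamma> m) (\<Gamma> m'))
       \<and> (\<forall>t\<in>T sc 2. \<Gamma> (emb sc 2 t) = \<gamma> t)
       \<and> \<Gamma> (munit sc 2) = e
       \<and> (\<forall>m. m \<notin> M sc 2 \<longrightarrow> \<Gamma> m = mzero))"

definition inT2 :: "('k::field \<Rightarrow> 'a::ring \<Rightarrow> 'a) \<Rightarrow> ('a,'k) mlt \<Rightarrow> ('a,'k) tens" where
  "inT2 sc m = (THE t. t \<in> T sc 2 \<and> emb sc 2 t = m)"

definition T1 :: "('k::field \<Rightarrow> 'a::ring \<Rightarrow> 'a) \<Rightarrow> ('a \<Rightarrow> ('a,'k) mlt) \<Rightarrow> 'a \<Rightarrow> 'a \<Rightarrow> ('a,'k) tens" where "T1 sc \<Delta> a b = inT2 sc (mmul sc 2 (\<Delta> a) (pm sc 2 [None, Some b]))"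
definition T2 :: "('k::field \<Rightarrow> 'a::ring \<Rightarrow> 'a) \<Rightarrow> ('a \<Rightarrow> ('a,'k) mlt) \<Rightarrow> 'a \<Rightarrow> 'a \<Rightarrow> ('a,'k) tens" where "T2 sc \<Delta> a b = inT2 sc (mmul sc 2 (pm sc 2 [Some a, None]) (\<Delta> b))"
definition T3 :: "('k::field \<Rightarrow> 'a::ring \<Rightarrow> 'a) \<Rightarrow> ('a \<Rightarrow> ('a,'k) mlt) \<Rightarrow> 'a \<Rightarrow> 'a \<Rightarrow> ('a,'k) tens" where "T3 sc \<Delta> a b = inT2 sc (mmul sc 2 (pm sc 2 [None, Some b]) (\<Delta> a))"
definition T4 :: "('k::field \<Rightarrow> 'a::ring \<Rightarrow> 'a) \<Rightarrow> ('a \<Rightarrow> ('a,'k) mlt) \<Rightarrow> 'a \<Rightarrow> 'a \<Rightarrow> ('a,'k) tens" where "T4 sc \<Delta> a b = inT2 sc (mmul sc 2 (\<Delta> b) (pm sc 2 [Some a, None]))"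

definition T1map :: "('k::field \<Rightarrow> 'a::ring \<Rightarrow> 'a) \<Rightarrow> ('a \<Rightarrow> ('a,'k) mlt) \<Rightarrow> ('a,'k) tens \<Rightarrow> ('a,'k) tens" where "T1map sc \<Delta> x = sum_list (map (\<lambda>as. T1 sc \<Delta> (as!0) (as!1)) (rep sc 2 x))"
definition T2map :: "('k::field \<Rightarrow> 'a::ring \<Rightarrow> 'a) \<Rightarrow> ('a \<Rightarrow> ('a,'k) mlt) \<Rightarrow> ('a,'k) tens \<Rightarrow> ('a,'k) tens" where "T2map sc \<Delta> x = sum_list (map (\<lambda>as. T2 sc \<Delta> (as!0) (as!1)) (rep sc 2 x))"

definition epsid :: "('k::field \<Rightarrow> 'a::ring \<Rightarrow> 'a) \<Rightarrow> ('a \<Rightarrow> 'k) \<Rightarrow> ('a,'k) tens \<Rightarrow> 'a" where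
  "epsid sc \<epsilon> x = sum_list (map (\<lambda>as. sc (\<epsilon> (as!0)) (as!1)) (rep sc 2 x))"
definition ideps :: "('k::field \<Rightarrow> 'a::ring \<Rightarrow> 'a) \<Rightarrow> ('a \<Rightarrow> 'k) \<Rightarrow> ('a,'k) tens \<Rightarrow> 'a" where
  "ideps sc \<epsilon> x = sum_list (map (\<lambda>as. sc (\<epsilon> (as!1)) (as!0)) (rep sc 2 x))"

definition DeltaId :: "('k::field \<Rightarrow> 'a::ring \<Rightarrow> 'a) \<Rightarrow> ('a \<Rightarrow> ('a,'k) mlt) \<Rightarrow> ('a,'k) tens \<Rightarrow> ('a,'k) mlt" where
  "DeltaId sc \<Delta> x = msum (map (\<lambda>as. mmul sc 3 (mliftL sc 2 3 (\<Delta> (as!0))) (pm sc 3 [None, None, Some (as!1)])) (rep sc 2 x))"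
definition IdDelta :: "('k::field \<Rightarrow> 'a::ring \<Rightarrow> 'a) \<Rightarrow> ('a \<Rightarrow> ('a,'k) mlt) \<Rightarrow> ('a,'k) tens \<Rightarrow> ('a,'k) mlt" where
  "IdDelta sc \<Delta> x = msum (map (\<lambda>as. mmul sc 3 (pm sc 3 [Some (as!0), None, None]) (mliftR sc 1 3 (\<Delta> (as!1)))) (rep sc 2 x))"

definition wmba :: "('k::field \<Rightarrow> 'a::ring \<Rightarrow> 'a) \<Rightarrow> ('a,'k) mlt \<Rightarrow> ('a \<Rightarrow> ('a,'k) mlt) \<Rightarrow> ('a \<Rightarrow> 'k) \<Rightarrow> bool" where
  "wmba sc E \<Delta> \<epsilon> \<longleftrightarrow>
     algebra_over sc
   \<comment> \<open>idempotent, non-degenerate multiplication\<close>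
   \<and> (\<forall>c::'a. \<exists>xys. c = sum_list (map (\<lambda>(x,y). x * y) xys))
   \<and> (\<forall>b::'a. (\<forall>a. a * b = 0) \<longrightarrow> b = 0) \<and> (\<forall>b::'a. (\<forall>a. b * a = 0) \<longrightarrow> b = 0)
   \<comment> \<open>E idempotent multiplier\<close>
   \<and> E \<in> M sc 2 \<and> mmul sc 2 E E = E
   \<comment> \<open>Delta multiplicative linear\<close>
   \<and> (\<forall>a. \<Delta> a \<in> M sc 2)
   \<and> (\<forall>a b. \<Delta> (a * b) = mmul sc 2 (\<Delta> a) (\<Delta> b))
   \<and> (\<forall>c a b. \<Delta> (sc c a + b) = (\<lambda>x. tscale c (fst (\<Delta> a) x) + fst (\<Delta> b) x,
                                  \<lambda>x. tscale c (snd (\<Delta> a) x) + snd (\<Delta> b) x))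
   \<comment> \<open>epsilon linear\<close>
   \<and> (\<forall>c a b. \<epsilon> (sc c a + b) = c * \<epsilon> a + \<epsilon> b)
   \<comment> \<open>(i)\<close>
   \<and> (\<forall>a b. \<exists>t\<in>T sc 2. emb sc 2 t = mmul sc 2 (\<Delta> a) (pm sc 2 [None, Some b]))
   \<and> (\<forall>a b. \<exists>t\<in>T sc 2. emb sc 2 t = mmul sc 2 (pm sc 2 [Some a, None]) (\<Delta> b))
   \<comment> \<open>(ii)\<close>
   \<and> (\<forall>x\<in>T sc 3. liftL sc 2 3 (T2map sc \<Delta>) (liftR sc 1 3 (T1map sc \<Delta>) x)
                 = liftR sc 1 3 (T1map sc \<Delta>) (liftL sc 2 3 (T2map sc \<Delta>) x))
   \<comment> \<open>(iii)\<close>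
   \<and> (\<forall>a b. epsid sc \<epsilon> (T1 sc \<Delta> a b) = a * b)
   \<and> (\<forall>a b. ideps sc \<epsilon> (T2 sc \<Delta> a b) = a * b)
   \<comment> \<open>(iv)\<close>
   \<and> tspan {fst (\<Delta> a) (etens sc [b, b']) | a b b'. True} = tspan {fst E (etens sc [b, b']) | b b'. True}
   \<and> tspan {snd (\<Delta> a) (etens sc [b, b']) | a b b'. True} = tspan {snd E (etens sc [b, b']) | b b'. True}
   \<comment> \<open>(v)\<close>
   \<and> ext sc (IdDelta sc \<Delta>) (mliftR sc 1 3 E) E = ext sc (DeltaId sc \<Delta>) (mliftL sc 2 3 E) E
   \<and> mmul sc 3 (mliftL sc 2 3 E) (mliftR sc 1 3 E) = ext sc (IdDelta sc \<Delta>) (mliftR sc 1 3 E) E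
   \<and> mmul sc 3 (mliftR sc 1 3 E) (mliftL sc 2 3 E) = ext sc (IdDelta sc \<Delta>) (mliftR sc 1 3 E) E
   \<comment> \<open>(vi)\<close>
   \<and> (\<forall>a b c. epsid sc \<epsilon> (fst (pm sc 2 [None, Some a]) (fst E (etens sc [b, c])))
               = epsid sc \<epsilon> (fst (\<Delta> a) (etens sc [b, c])))
   \<and> (\<forall>a b c. epsid sc \<epsilon> (snd (pm sc 2 [None, Some c]) (snd E (etens sc [a, b])))
               = epsid sc \<epsilon> (snd (\<Delta> c) (etens sc [a, b])))"

definition regular_wmba :: "('k::field \<Rightarrow> 'a::ring \<Rightarrow> 'a) \<Rightarrow> ('a,'k) mlt \<Rightarrow> ('a \<Rightarrow> ('a,'k) mlt) \<Rightarrow> ('a \<Rightarrow> 'k) \<Rightarrow> bool" where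
  "regular_wmba sc E \<Delta> \<epsilon> \<longleftrightarrow> wmba sc E \<Delta> \<epsilon>
   \<and> (\<forall>a b. \<exists>t\<in>T sc 2. emb sc 2 t = mmul sc 2 (pm sc 2 [None, Some b]) (\<Delta> a))
   \<and> (\<forall>a b. \<exists>t\<in>T sc 2. emb sc 2 t = mmul sc 2 (\<Delta> b) (pm sc 2 [Some a, None]))"

text \<open>Each is a pair (left action m b, right action b m) on A.\<close>
definition piLbar :: "('k::field \<Rightarrow> 'a::ring \<Rightarrow> 'a) \<Rightarrow> ('a,'k) mlt \<Rightarrow> ('a \<Rightarrow> ('a,'k) mlt) \<Rightarrow> ('a \<Rightarrow> 'k) \<Rightarrow> 'a \<Rightarrow> ('a \<Rightarrow> 'a) \<times> ('a \<Rightarrow> 'a)" where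
  "piLbar sc E \<Delta> \<epsilon> a = (\<lambda>b. epsid sc \<epsilon> (T2 sc \<Delta> a b), \<lambda>b. epsid sc \<epsilon> (snd E (etens sc [a, b])))"
definition piRbar :: "('k::field \<Rightarrow> 'a::ring \<Rightarrow> 'a) \<Rightarrow> ('a,'k) mlt \<Rightarrow> ('a \<Rightarrow> ('a,'k) mlt) \<Rightarrow> ('a \<Rightarrow> 'k) \<Rightarrow> 'a \<Rightarrow> ('a \<Rightarrow> 'a) \<times> ('a \<Rightarrow> 'a)" where
  "piRbar sc E \<Delta> \<epsilon> a = (\<lambda>b. ideps sc \<epsilon> (fst E (etens sc [b, a])), \<lambda>b. ideps sc \<epsilon> (T1 sc \<Delta> b a))"
definition piL :: "('k::field \<Rightarrow> 'a::ring \<Rightarrow> 'a) \<Rightarrow> ('a,'k) mlt \<Rightarrow> ('a \<Rightarrow> ('a,'k) mlt) \<Rightarrow> ('a \<Rightarrow> 'k) \<Rightarrow> 'a \<Rightarrow> ('a \<Rightarrow> 'a) \<times> ('a \<Rightarrow> 'a)" where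
  "piL sc E \<Delta> \<epsilon> a = (\<lambda>b. epsid sc \<epsilon> (fst E (etens sc [a, b])), \<lambda>b. epsid sc \<epsilon> (T4 sc \<Delta> a b))"
definition piR :: "('k::field \<Rightarrow> 'a::ring \<Rightarrow> 'a) \<Rightarrow> ('a,'k) mlt \<Rightarrow> ('a \<Rightarrow> ('a,'k) mlt) \<Rightarrow> ('a \<Rightarrow> 'k) \<Rightarrow> 'a \<Rightarrow> ('a \<Rightarrow> 'a) \<times> ('a \<Rightarrow> 'a)" where
  "piR sc E \<Delta> \<epsilon> a = (\<lambda>b. ideps sc \<epsilon> (T3 sc \<Delta> b a), \<lambda>b. ideps sc \<epsilon> (snd E (etens sc [b, a])))"

end

theory Submission
  imports Defs
begin

text \<open>
  Elements of \<open>A \<otimes> A\<close> are handled through their values on pairs of linear functionals, which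
  separate points over a field. Non-degeneracy of \<open>A\<close> then lifts to \<open>A \<otimes> A\<close>: an element of
  \<open>A \<otimes> A\<close> is determined by its products with elementary tensors on either side.

  The right multiples \<open>T\<^sub>1(a \<otimes> b)(c \<otimes> d) = \<Delta>(a)(c \<otimes> bd)\<close> lie in the span of \<open>E(A \<otimes> A)\<close> by
  axiom (iv), so the idempotent \<open>E\<close> fixes them and hence \<open>E T\<^sub>1(a \<otimes> b) = T\<^sub>1(a \<otimes> b)\<close>. Therefore
  \<open>\<Sum>\<^sub>i \<sqinter>\<^sup>L(x\<^sub>i) y\<^sub>i = (\<epsilon> \<otimes> id)(E T\<^sub>1(a \<otimes> b)) = (\<epsilon> \<otimes> id) T\<^sub>1(a \<otimes> b) = ab\<close> by the counit axiom,
  which is (3); (4) is symmetric. In the same way \<open>T\<^sub>3(a \<otimes> b) E = T\<^sub>3(a \<otimes> b)\<close>, and (1) reduces to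
  \<open>(\<epsilon> \<otimes> id) T\<^sub>3(a \<otimes> b) = ba\<close>. This holds after right multiplication by any \<open>c\<close>, because
  \<open>T\<^sub>3(a \<otimes> b)(1 \<otimes> c) = (1 \<otimes> b) T\<^sub>1(a \<otimes> c)\<close> and \<open>(\<epsilon> \<otimes> id) T\<^sub>1(a \<otimes> c) = ac\<close>; non-degeneracy
  cancels \<open>c\<close>. (2) is symmetric.
\<close>

lemma algebra_over_vector_space: "algebra_over sc \<Longrightarrow> Vector_Spaces.vector_space sc"
  by (simp add: algebra_over_def)

lemma vector_space_field: "Vector_Spaces.vector_space ((*) :: 'k::field \<Rightarrow> 'k \<Rightarrow> 'k)"
  by unfold_locales (auto simp: algebra_simps)

lemma scale_mult_left: "algebra_over sc \<Longrightarrow> sc k a * c = sc k (a * c)"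
  unfolding algebra_over_def by metis

lemma scale_mult_right: "algebra_over sc \<Longrightarrow> c * sc k a = sc k (c * a)"
  unfolding algebra_over_def by metis

lemma linear_algebraI:
  assumes "algebra_over sc" "\<And>x y. f (x + y) = f x + f y" "\<And>c x. f (sc c x) = sc c (f x)"
  shows "Vector_Spaces.linear sc sc f"
  using assms by (simp add: linear_iff algebra_over_vector_space)

lemma linear_id_algebra: "algebra_over sc \<Longrightarrow> Vector_Spaces.linear sc sc (\<lambda>x. x)"
  by (rule linear_algebraI) auto

lemma linear_mult_left: "algebra_over sc \<Longrightarrow> Vector_Spaces.linear sc sc (\<lambda>x. b * x)"
  by (rule linear_algebraI) (auto simp: distrib_left scale_mult_right)

lemma linear_mult_right: "algebra_over sc \<Longrightarrow> Vector_Spaces.linear sc sc (\<lambda>x. x * b)"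
  by (rule linear_algebraI) (auto simp: distrib_right scale_mult_left)

lemma lin_fun_compose:
  "lin_fun sc \<phi> \<Longrightarrow> Vector_Spaces.linear sc sc f \<Longrightarrow> lin_fun sc (\<lambda>x. \<phi> (f x))"
  unfolding lin_fun_def using Vector_Spaces.linear_compose[of sc sc f "(*)" \<phi>]
  by (simp add: comp_def)

lemma lin_fun_add: "lin_fun sc \<phi> \<Longrightarrow> \<phi> (x + y) = \<phi> x + \<phi> y"
  unfolding lin_fun_def linear_iff by simp

lemma lin_fun_scale: "lin_fun sc \<phi> \<Longrightarrow> \<phi> (sc c x) = c * \<phi> x"
  unfolding lin_fun_def linear_iff by simp

lemma lin_fun_zero: "lin_fun sc \<phi> \<Longrightarrow> \<phi> 0 = 0"
  using lin_fun_add[of sc \<phi> 0 0] by (metis add_cancel_right_right add_0)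

lemma lin_fun_diff: "lin_fun sc \<phi> \<Longrightarrow> \<phi> (x - y) = \<phi> x - \<phi> y"
  using lin_fun_add[of sc \<phi> "x - y" y] by (simp add: algebra_simps)

lemma lin_fun_sum_list_scale:
  "lin_fun sc \<phi> \<Longrightarrow>
   \<phi> (\<Sum>(x,y)\<leftarrow>ps. sc (k x y) (h x y)) = (\<Sum>(x,y)\<leftarrow>ps. k x y * \<phi> (h x y))"
  by (induct ps) (auto simp: lin_fun_add lin_fun_zero lin_fun_scale)

lemma lin_funI:
  assumes "algebra_over sc" "\<forall>c a b. \<epsilon> (sc c a + b) = c * \<epsilon> a + \<epsilon> b"
  shows "lin_fun sc \<epsilon>"
proof -
  interpret vector_space sc by (rule algebra_over_vector_space[OF assms(1)])
  have zero: "\<epsilon> 0 = 0"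
    using assms(2)[rule_format, of 1 0 0] by (metis scale_one add_cancel_right_right add_0 mult_1)
  have "\<epsilon> (x + y) = \<epsilon> x + \<epsilon> y" "\<epsilon> (sc c x) = c * \<epsilon> x" for c x y
    using assms(2)[rule_format, of 1 x y] assms(2)[rule_format, of c x 0] zero by simp_all
  then show ?thesis
    unfolding lin_fun_def linear_iff
    using vector_space_field algebra_over_vector_space[OF assms(1)] by auto
qed

lemma lin_fun_separates:
  fixes sc :: "'k::field \<Rightarrow> 'a::ring \<Rightarrow> 'a"
  assumes "algebra_over sc" "w \<noteq> 0"
  obtains \<phi> where "lin_fun sc \<phi>" "\<phi> w \<noteq> 0"
proof -
  interpret V: vector_space sc by (rule algebra_over_vector_space[OF assms(1)])
  interpret P: vector_space_pair sc "(*) :: 'k \<Rightarrow> 'k \<Rightarrow> 'k"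
    by (simp add: vector_space_pair_def algebra_over_vector_space[OF assms(1)] vector_space_field)
  have "V.independent {w}"
    using assms(2) by (simp add: V.independent_insert V.span_empty)
  then obtain g where "Vector_Spaces.linear sc (*) g" "g w = 1"
    using P.linear_independent_extend[of "{w}" "\<lambda>_. 1"] by auto
  then show ?thesis using that unfolding lin_fun_def by auto
qed

lemma lin_fun_eqI:
  assumes "algebra_over sc" "\<And>\<phi>. lin_fun sc \<phi> \<Longrightarrow> \<phi> u = \<phi> v"
  shows "u = v"
proof (rule ccontr)
  assume "u \<noteq> v"
  then obtain \<phi> where "lin_fun sc \<phi>" "\<phi> (u - v) \<noteq> 0"
    using lin_fun_separates[OF assms(1), of "u - v"] by auto
  then show False using assms(2) lin_fun_diff by fastforce
qed

lemma sum_list_map_swap: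
  fixes f :: "_ \<Rightarrow> _ \<Rightarrow> 'c::comm_monoid_add"
  shows "(\<Sum>x\<leftarrow>xs. \<Sum>y\<leftarrow>ys. f x y) = (\<Sum>y\<leftarrow>ys. \<Sum>x\<leftarrow>xs. f x y)"
  by (induct xs) (simp_all add: sum_list_addf)

section \<open>Elements of \<open>A \<otimes> A\<close>\<close>

definition tens2 :: "('k::field \<Rightarrow> 'a::ring \<Rightarrow> 'a) \<Rightarrow> ('a \<times> 'a) list \<Rightarrow> ('a,'k) tens" where
  "tens2 sc ps = tsum sc (map (\<lambda>(x,y). [x,y]) ps)"

lemma tens2_apply:
  "lin_fun sc \<phi> \<Longrightarrow> lin_fun sc \<psi> \<Longrightarrow> tens2 sc ps [\<phi>,\<psi>] = (\<Sum>(x,y)\<leftarrow>ps. \<phi> x * \<psi> y)"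
proof -
  assume "lin_fun sc \<phi>" "lin_fun sc \<psi>"
  then have "etens sc [x,y] [\<phi>,\<psi>] = \<phi> x * \<psi> y" for x y
    unfolding etens_def by simp
  then show ?thesis unfolding tens2_def tsum_def by (induct ps) auto
qed

lemma tens2_apply_other:
  assumes "\<nexists>\<phi> \<psi>. fs = [\<phi>,\<psi>] \<and> lin_fun sc \<phi> \<and> lin_fun sc \<psi>"
  shows "tens2 sc ps fs = 0"
proof -
  have "\<not> (length fs = 2 \<and> (\<forall>f\<in>set fs. lin_fun sc f))"
  proof
    assume "length fs = 2 \<and> (\<forall>f\<in>set fs. lin_fun sc f)"
    then obtain f g where "fs = [f,g]" "lin_fun sc f" "lin_fun sc g"
      by (cases fs; cases "tl fs") auto
    with assms show False by blast
  qed
  then have "etens sc [x,y] fs = 0" for x y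
    unfolding etens_def by auto
  then show ?thesis unfolding tens2_def tsum_def by (induct ps) auto
qed

lemma tens2_eqI:
  assumes "\<And>\<phi> \<psi>. lin_fun sc \<phi> \<Longrightarrow> lin_fun sc \<psi> \<Longrightarrow>
     (\<Sum>(x,y)\<leftarrow>ps. \<phi> x * \<psi> y) = (\<Sum>(x,y)\<leftarrow>qs. \<phi> x * \<psi> y)"
  shows "tens2 sc ps = tens2 sc qs"
proof
  fix fs
  show "tens2 sc ps fs = tens2 sc qs fs"
  proof (cases "\<exists>\<phi> \<psi>. fs = [\<phi>,\<psi>] \<and> lin_fun sc \<phi> \<and> lin_fun sc \<psi>")
    case True
    then obtain \<phi> \<psi> where "fs = [\<phi>,\<psi>]" "lin_fun sc \<phi>" "lin_fun sc \<psi>" by blast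
    then show ?thesis using assms[of \<phi> \<psi>] tens2_apply[of sc \<phi> \<psi>] by simp
  next
    case False
    then show ?thesis by (simp add: tens2_apply_other)
  qed
qed

lemma tens2_append: "tens2 sc (ps @ qs) = tens2 sc ps + tens2 sc qs"
  unfolding tens2_def tsum_def by (auto simp: fun_eq_iff)

lemma tens2_Nil: "tens2 sc [] = 0"
  unfolding tens2_def tsum_def by (auto simp: fun_eq_iff)

lemma etens_pair: "etens sc [x,y] = tens2 sc [(x,y)]"
  unfolding tens2_def tsum_def by (auto simp: fun_eq_iff)

lemma pair_lists:
  assumes "\<forall>as\<in>set xs. length as = 2"
  shows "map (\<lambda>(x,y). [x,y]) (map (\<lambda>as. (as!0, as!1)) xs) = xs"
proof -
  have pair: "[as!0, as!1] = as" if "length as = 2" for as :: "'a list"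
    using that by (cases as; cases "tl as") auto
  show ?thesis using assms by (induct xs) (auto dest: pair)
qed

lemma in_T_2_iff: "x \<in> T sc 2 \<longleftrightarrow> (\<exists>ps. x = tens2 sc ps)"
proof
  assume "x \<in> T sc 2"
  then obtain xs where xs: "\<forall>as\<in>set xs. length as = 2" "x = tsum sc xs"
    unfolding T_def by auto
  have "x = tens2 sc (map (\<lambda>as. (as!0, as!1)) xs)"
    unfolding tens2_def pair_lists[OF xs(1)] by (rule xs(2))
  then show "\<exists>ps. x = tens2 sc ps" ..
next
  assume "\<exists>ps. x = tens2 sc ps"
  then obtain ps where "x = tens2 sc ps" ..
  then show "x \<in> T sc 2"
    unfolding T_def tens2_def by (intro CollectI exI[of _ "map (\<lambda>(x,y). [x,y]) ps"]) auto
qed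

lemma tens2_in_T_2 [simp]: "tens2 sc ps \<in> T sc 2"
  using in_T_2_iff by blast

lemma etens_in_T_2 [simp]: "etens sc [x,y] \<in> T sc 2"
  by (simp add: etens_pair)

lemma rep_T_2:
  assumes "x \<in> T sc 2"
  obtains ps where "rep sc 2 x = map (\<lambda>(x,y). [x,y]) ps" "x = tens2 sc ps"
proof -
  have "\<exists>xs. (\<forall>as\<in>set xs. length as = 2) \<and> x = tsum sc xs"
    using assms unfolding T_def by auto
  then have "(\<forall>as\<in>set (rep sc 2 x). length as = 2) \<and> x = tsum sc (rep sc 2 x)"
    unfolding rep_def by (rule someI_ex)
  then have lengths: "\<forall>as\<in>set (rep sc 2 x). length as = 2" and x: "x = tsum sc (rep sc 2 x)"
    by blast+
  show ?thesis
  proof (rule that)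
    show "rep sc 2 x = map (\<lambda>(x,y). [x,y]) (map (\<lambda>as. (as!0, as!1)) (rep sc 2 x))"
      by (rule pair_lists[OF lengths, symmetric])
    show "x = tens2 sc (map (\<lambda>as. (as!0, as!1)) (rep sc 2 x))"
      unfolding tens2_def pair_lists[OF lengths] by (rule x)
  qed
qed

lemma add_in_T_2: "x \<in> T sc 2 \<Longrightarrow> y \<in> T sc 2 \<Longrightarrow> x + y \<in> T sc 2"
  unfolding in_T_2_iff by (auto simp: tens2_append[symmetric])

lemma zero_in_T_2: "0 \<in> T sc 2"
  using tens2_in_T_2[of sc "[]"] by (simp add: tens2_Nil)

lemma tscale_tens2:
  assumes "algebra_over sc"
  shows "tscale c (tens2 sc ps) = tens2 sc (map (\<lambda>(x,y). (sc c x, y)) ps)"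
proof
  fix fs
  show "tscale c (tens2 sc ps) fs = tens2 sc (map (\<lambda>(x,y). (sc c x, y)) ps) fs"
  proof (cases "\<exists>\<phi> \<psi>. fs = [\<phi>,\<psi>] \<and> lin_fun sc \<phi> \<and> lin_fun sc \<psi>")
    case True
    then obtain \<phi> \<psi> where fs: "fs = [\<phi>,\<psi>]" "lin_fun sc \<phi>" "lin_fun sc \<psi>" by blast
    have "c * (\<Sum>(x,y)\<leftarrow>ps. \<phi> x * \<psi> y)
        = (\<Sum>(x,y)\<leftarrow>map (\<lambda>(x,y). (sc c x, y)) ps. \<phi> x * \<psi> y)"
      by (induct ps) (auto simp: lin_fun_scale[OF fs(2)] algebra_simps)
    then show ?thesis using fs by (simp add: tscale_def tens2_apply)
  next
    case False
    then show ?thesis by (simp add: tscale_def tens2_apply_other)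
  qed
qed

lemma tscale_in_T_2: "algebra_over sc \<Longrightarrow> x \<in> T sc 2 \<Longrightarrow> tscale c x \<in> T sc 2"
  unfolding in_T_2_iff by (auto simp: tscale_tens2)

lemma tens2_map_cong:
  assumes "Vector_Spaces.linear sc sc f" "Vector_Spaces.linear sc sc g"
    and "tens2 sc ps = tens2 sc qs"
  shows "tens2 sc (map (\<lambda>(x,y). (f x, g y)) ps) = tens2 sc (map (\<lambda>(x,y). (f x, g y)) qs)"
proof (rule tens2_eqI)
  fix \<phi> \<psi> assume "lin_fun sc \<phi>" "lin_fun sc \<psi>"
  then have l: "lin_fun sc (\<lambda>x. \<phi> (f x))" "lin_fun sc (\<lambda>x. \<psi> (g x))"
    using assms(1,2) by (simp_all add: lin_fun_compose)
  have "(\<Sum>(x,y)\<leftarrow>ps. \<phi> (f x) * \<psi> (g y)) = (\<Sum>(x,y)\<leftarrow>qs. \<phi> (f x) * \<psi> (g y))"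
    using arg_cong[OF assms(3), of "\<lambda>t. t [\<lambda>x. \<phi> (f x), \<lambda>x. \<psi> (g x)]"]
    by (simp add: tens2_apply[OF l])
  then show "(\<Sum>(x,y)\<leftarrow>map (\<lambda>(x,y). (f x, g y)) ps. \<phi> x * \<psi> y)
           = (\<Sum>(x,y)\<leftarrow>map (\<lambda>(x,y). (f x, g y)) qs. \<phi> x * \<psi> y)"
    by (simp add: comp_def case_prod_unfold)
qed

lemma tens2_contract_left_cong:
  assumes "algebra_over sc" "lin_fun sc \<epsilon>" "tens2 sc ps = tens2 sc qs"
  shows "(\<Sum>(x,y)\<leftarrow>ps. sc (\<epsilon> x) y) = (\<Sum>(x,y)\<leftarrow>qs. sc (\<epsilon> x) y)"
proof (rule lin_fun_eqI[OF assms(1)])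
  fix \<phi> assume \<phi>: "lin_fun sc \<phi>"
  have "\<phi> (\<Sum>(x,y)\<leftarrow>rs. sc (\<epsilon> x) y) = tens2 sc rs [\<epsilon>, \<phi>]" for rs
    using lin_fun_sum_list_scale[OF \<phi>, of "\<lambda>x y. \<epsilon> x" "\<lambda>x y. y" rs] tens2_apply[OF assms(2) \<phi>]
    by (simp add: case_prod_unfold)
  then show "\<phi> (\<Sum>(x,y)\<leftarrow>ps. sc (\<epsilon> x) y) = \<phi> (\<Sum>(x,y)\<leftarrow>qs. sc (\<epsilon> x) y)"
    using assms(3) by simp
qed

lemma tens2_contract_right_cong:
  assumes "algebra_over sc" "lin_fun sc \<epsilon>" "tens2 sc ps = tens2 sc qs"
  shows "(\<Sum>(x,y)\<leftarrow>ps. sc (\<epsilon> y) x) = (\<Sum>(x,y)\<leftarrow>qs. sc (\<epsilon> y) x)"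
proof (rule lin_fun_eqI[OF assms(1)])
  fix \<phi> assume \<phi>: "lin_fun sc \<phi>"
  have "\<phi> (\<Sum>(x,y)\<leftarrow>rs. sc (\<epsilon> y) x) = tens2 sc rs [\<phi>, \<epsilon>]" for rs
    using lin_fun_sum_list_scale[OF \<phi>, of "\<lambda>x y. \<epsilon> y" "\<lambda>x y. x" rs] tens2_apply[OF \<phi> assms(2)]
    by (simp add: case_prod_unfold mult.commute)
  then show "\<phi> (\<Sum>(x,y)\<leftarrow>ps. sc (\<epsilon> y) x) = \<phi> (\<Sum>(x,y)\<leftarrow>qs. sc (\<epsilon> y) x)"
    using assms(3) by simp
qed

lemma epsid_tens2:
  assumes "algebra_over sc" "lin_fun sc \<epsilon>"
  shows "epsid sc \<epsilon> (tens2 sc ps) = (\<Sum>(x,y)\<leftarrow>ps. sc (\<epsilon> x) y)"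
proof -
  obtain qs where qs: "rep sc 2 (tens2 sc ps) = map (\<lambda>(x,y). [x,y]) qs" "tens2 sc ps = tens2 sc qs"
    using rep_T_2[OF tens2_in_T_2] .
  show ?thesis
    unfolding epsid_def qs(1) tens2_contract_left_cong[OF assms qs(2)]
    by (simp add: comp_def case_prod_unfold)
qed

lemma ideps_tens2:
  assumes "algebra_over sc" "lin_fun sc \<epsilon>"
  shows "ideps sc \<epsilon> (tens2 sc ps) = (\<Sum>(x,y)\<leftarrow>ps. sc (\<epsilon> y) x)"
proof -
  obtain qs where qs: "rep sc 2 (tens2 sc ps) = map (\<lambda>(x,y). [x,y]) qs" "tens2 sc ps = tens2 sc qs"
    using rep_T_2[OF tens2_in_T_2] .
  show ?thesis
    unfolding ideps_def qs(1) tens2_contract_right_cong[OF assms qs(2)]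
    by (simp add: comp_def case_prod_unfold)
qed

section \<open>Multiplication and non-degeneracy of \<open>A \<otimes> A\<close>\<close>

definition pairs_mult :: "('a::ring \<times> 'a) list \<Rightarrow> ('a \<times> 'a) list \<Rightarrow> ('a \<times> 'a) list" where
  "pairs_mult ps qs = concat (map (\<lambda>(a,b). map (\<lambda>(c,d). (a*c, b*d)) qs) ps)"

lemma tens2_pairs_mult_apply:
  "lin_fun sc \<phi> \<Longrightarrow> lin_fun sc \<psi> \<Longrightarrow>
   tens2 sc (pairs_mult ps qs) [\<phi>,\<psi>] = (\<Sum>(a,b)\<leftarrow>ps. \<Sum>(c,d)\<leftarrow>qs. \<phi> (a*c) * \<psi> (b*d))"
  by (simp add: tens2_apply) (induct ps, auto simp: pairs_mult_def case_prod_unfold comp_def)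

lemma pairs_mult_cong_left:
  assumes "algebra_over sc" "tens2 sc ps = tens2 sc ps'"
  shows "tens2 sc (pairs_mult ps qs) = tens2 sc (pairs_mult ps' qs)"
proof (rule tens2_eqI)
  fix \<phi> \<psi> assume l: "lin_fun sc \<phi>" "lin_fun sc \<psi>"
  have "(\<Sum>(a,b)\<leftarrow>rs. \<Sum>(c,d)\<leftarrow>qs. \<phi> (a*c) * \<psi> (b*d))
      = (\<Sum>(c,d)\<leftarrow>qs. tens2 sc rs [\<lambda>x. \<phi> (x*c), \<lambda>x. \<psi> (x*d)])" for rs
    using sum_list_map_swap[where f="\<lambda>(a,b) (c,d). \<phi> (a*c) * \<psi> (b*d)" and xs=rs and ys=qs]
      tens2_apply[OF lin_fun_compose[OF l(1) linear_mult_right[OF assms(1)]]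
                     lin_fun_compose[OF l(2) linear_mult_right[OF assms(1)]]]
    by (simp add: case_prod_unfold)
  then show "(\<Sum>(x,y)\<leftarrow>pairs_mult ps qs. \<phi> x * \<psi> y)
      = (\<Sum>(x,y)\<leftarrow>pairs_mult ps' qs. \<phi> x * \<psi> y)"
    using tens2_pairs_mult_apply[OF l] tens2_apply[OF l] assms(2) by metis
qed

lemma pairs_mult_cong_right:
  assumes "algebra_over sc" "tens2 sc qs = tens2 sc qs'"
  shows "tens2 sc (pairs_mult ps qs) = tens2 sc (pairs_mult ps qs')"
proof (rule tens2_eqI)
  fix \<phi> \<psi> assume l: "lin_fun sc \<phi>" "lin_fun sc \<psi>"
  have "(\<Sum>(a,b)\<leftarrow>ps. \<Sum>(c,d)\<leftarrow>rs. \<phi> (a*c) * \<psi> (b*d))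
      = (\<Sum>(a,b)\<leftarrow>ps. tens2 sc rs [\<lambda>x. \<phi> (a*x), \<lambda>x. \<psi> (b*x)])" for rs
    using tens2_apply[OF lin_fun_compose[OF l(1) linear_mult_left[OF assms(1)]]
                         lin_fun_compose[OF l(2) linear_mult_left[OF assms(1)]]]
    by (simp add: case_prod_unfold)
  then show "(\<Sum>(x,y)\<leftarrow>pairs_mult ps qs. \<phi> x * \<psi> y)
      = (\<Sum>(x,y)\<leftarrow>pairs_mult ps qs'. \<phi> x * \<psi> y)"
    using tens2_pairs_mult_apply[OF l] tens2_apply[OF l] assms(2) by metis
qed

lemma pairs_mult_lists:
  "[map2 (*) as bs. as \<leftarrow> map (\<lambda>(x,y). [x,y]) ps, bs \<leftarrow> map (\<lambda>(x,y). [x,y]) qs]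
   = map (\<lambda>(x,y). [x,y]) (pairs_mult ps qs)"
  by (induct ps) (auto simp: pairs_mult_def map_concat comp_def case_prod_unfold)

lemma tmul_tens2:
  assumes "algebra_over sc"
  shows "tmul sc 2 (tens2 sc ps) (tens2 sc qs) = tens2 sc (pairs_mult ps qs)"
proof -
  obtain ps' where ps': "rep sc 2 (tens2 sc ps) = map (\<lambda>(x,y). [x,y]) ps'" "tens2 sc ps = tens2 sc ps'"
    using rep_T_2[OF tens2_in_T_2] .
  obtain qs' where qs': "rep sc 2 (tens2 sc qs) = map (\<lambda>(x,y). [x,y]) qs'" "tens2 sc qs = tens2 sc qs'"
    using rep_T_2[OF tens2_in_T_2] .
  have "tmul sc 2 (tens2 sc ps) (tens2 sc qs) = tens2 sc (pairs_mult ps' qs')"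
    unfolding tmul_def ps'(1) qs'(1) unfolding pairs_mult_lists tens2_def ..
  also have "\<dots> = tens2 sc (pairs_mult ps qs)"
    using pairs_mult_cong_left[OF assms ps'(2)[symmetric]] pairs_mult_cong_right[OF assms qs'(2)[symmetric]]
    by simp
  finally show ?thesis .
qed

lemma tmul_in_T_2: "algebra_over sc \<Longrightarrow> x \<in> T sc 2 \<Longrightarrow> y \<in> T sc 2 \<Longrightarrow> tmul sc 2 x y \<in> T sc 2"
  unfolding in_T_2_iff by (auto simp: tmul_tens2)

lemma pairs_mult_assoc: "pairs_mult (pairs_mult ps qs) rs = pairs_mult ps (pairs_mult qs rs)"
proof -
  have append: "pairs_mult (xs @ ys) rs = pairs_mult xs rs @ pairs_mult ys rs" for xs ys :: "('a \<times> 'a) list"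
    by (simp add: pairs_mult_def)
  have scale: "pairs_mult (map (\<lambda>(c,d). (a*c, b*d)) qs) rs = map (\<lambda>(c,d). (a*c, b*d)) (pairs_mult qs rs)"
    for a b qs
    by (induct qs) (auto simp: pairs_mult_def mult.assoc)
  have cons: "pairs_mult ((a,b)#ps) qs = map (\<lambda>(c,d). (a*c, b*d)) qs @ pairs_mult ps qs" for a b ps qs
    by (simp add: pairs_mult_def)
  show ?thesis
  proof (induct ps)
    case Nil then show ?case by (simp add: pairs_mult_def)
  next
    case (Cons p ps) then show ?case by (cases p) (simp only: append scale cons)
  qed
qed

lemma tmul_assoc2:
  assumes "algebra_over sc" "x \<in> T sc 2" "y \<in> T sc 2" "z \<in> T sc 2"
  shows "tmul sc 2 (tmul sc 2 x y) z = tmul sc 2 x (tmul sc 2 y z)"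
  using assms(2-4) unfolding in_T_2_iff by (auto simp: tmul_tens2[OF assms(1)] pairs_mult_assoc)

lemma tmul_tens2_etens:
  assumes "algebra_over sc"
  shows "tmul sc 2 (tens2 sc ps) (etens sc [c,d]) = tens2 sc (map (\<lambda>(a,b). (a*c, b*d)) ps)"
proof -
  have "pairs_mult ps [(c,d)] = map (\<lambda>(a,b). (a*c, b*d)) ps"
    by (induct ps) (auto simp: pairs_mult_def)
  then show ?thesis by (simp add: etens_pair tmul_tens2[OF assms])
qed

lemma tmul_etens_tens2:
  assumes "algebra_over sc"
  shows "tmul sc 2 (etens sc [c,d]) (tens2 sc ps) = tens2 sc (map (\<lambda>(a,b). (c*a, d*b)) ps)"
  by (simp add: etens_pair tmul_tens2[OF assms] pairs_mult_def case_prod_unfold)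

lemma lin_fun_cancel_right:
  fixes sc :: "'k::field \<Rightarrow> 'a::ring \<Rightarrow> 'a" and ps qs :: "('a \<times> 'k) list"
  assumes alg: "algebra_over sc" and nd: "\<forall>b::'a. (\<forall>a. b * a = 0) \<longrightarrow> b = 0"
    and eq: "\<And>c \<phi>. lin_fun sc \<phi> \<Longrightarrow>
      (\<Sum>(a,k)\<leftarrow>ps. k * \<phi> (a*c)) = (\<Sum>(a,k)\<leftarrow>qs. k * \<phi> (a*c))"
    and \<phi>: "lin_fun sc \<phi>"
  shows "(\<Sum>(a,k)\<leftarrow>ps. k * \<phi> a) = (\<Sum>(a,k)\<leftarrow>qs. k * \<phi> a)"
proof -
  \<comment> \<open>both sides are \<open>\<phi>\<close> of an element of \<open>A\<close> whose right multiples agree under every functional\<close>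
  define u where "u rs = (\<Sum>(a,k)\<leftarrow>rs. sc k a)" for rs :: "('a \<times> 'k) list"
  have u_apply: "\<phi>' (u rs * c) = (\<Sum>(a,k)\<leftarrow>rs. k * \<phi>' (a*c))" if "lin_fun sc \<phi>'" for \<phi>' rs c
  proof -
    have "u rs * c = (\<Sum>(a,k)\<leftarrow>rs. sc k (a*c))"
      unfolding u_def sum_list_mult_const[symmetric] by (simp add: case_prod_unfold scale_mult_left[OF alg])
    then show ?thesis
      using lin_fun_sum_list_scale[OF that, of "\<lambda>a k. k" "\<lambda>a k. a*c" rs] by (simp add: case_prod_unfold)
  qed
  have "(u ps - u qs) * c = 0" for c
    using lin_fun_eqI[OF alg, of "u ps * c" "u qs * c"] u_apply eq by (simp add: left_diff_distrib)
  then have "u ps - u qs = 0" using nd by blast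
  then have "u ps = u qs" by simp
  moreover have "\<phi> (u rs) = (\<Sum>(a,k)\<leftarrow>rs. k * \<phi> a)" for rs
    unfolding u_def using lin_fun_sum_list_scale[OF \<phi>, of "\<lambda>a k. k" "\<lambda>a k. a" rs]
    by (simp add: case_prod_unfold)
  ultimately show ?thesis by metis
qed

lemma lin_fun_cancel_left:
  fixes sc :: "'k::field \<Rightarrow> 'a::ring \<Rightarrow> 'a" and ps qs :: "('a \<times> 'k) list"
  assumes alg: "algebra_over sc" and nd: "\<forall>b::'a. (\<forall>a. a * b = 0) \<longrightarrow> b = 0"
    and eq: "\<And>c \<phi>. lin_fun sc \<phi> \<Longrightarrow>
      (\<Sum>(a,k)\<leftarrow>ps. k * \<phi> (c*a)) = (\<Sum>(a,k)\<leftarrow>qs. k * \<phi> (c*a))"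
    and \<phi>: "lin_fun sc \<phi>"
  shows "(\<Sum>(a,k)\<leftarrow>ps. k * \<phi> a) = (\<Sum>(a,k)\<leftarrow>qs. k * \<phi> a)"
proof -
  define u where "u rs = (\<Sum>(a,k)\<leftarrow>rs. sc k a)" for rs :: "('a \<times> 'k) list"
  have u_apply: "\<phi>' (c * u rs) = (\<Sum>(a,k)\<leftarrow>rs. k * \<phi>' (c*a))" if "lin_fun sc \<phi>'" for \<phi>' rs c
  proof -
    have "c * u rs = (\<Sum>(a,k)\<leftarrow>rs. sc k (c*a))"
      unfolding u_def sum_list_const_mult[symmetric] by (simp add: case_prod_unfold scale_mult_right[OF alg])
    then show ?thesis
      using lin_fun_sum_list_scale[OF that, of "\<lambda>a k. k" "\<lambda>a k. c*a" rs] by (simp add: case_prod_unfold)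
  qed
  have "c * (u ps - u qs) = 0" for c
    using lin_fun_eqI[OF alg, of "c * u ps" "c * u qs"] u_apply eq by (simp add: right_diff_distrib)
  then have "u ps - u qs = 0" using nd by blast
  then have "u ps = u qs" by simp
  moreover have "\<phi> (u rs) = (\<Sum>(a,k)\<leftarrow>rs. k * \<phi> a)" for rs
    unfolding u_def using lin_fun_sum_list_scale[OF \<phi>, of "\<lambda>a k. k" "\<lambda>a k. a" rs]
    by (simp add: case_prod_unfold)
  ultimately show ?thesis by metis
qed

lemma tens2_cancel_right:
  fixes sc :: "'k::field \<Rightarrow> 'a::ring \<Rightarrow> 'a"
  assumes alg: "algebra_over sc" and nd: "\<forall>b::'a. (\<forall>a. b * a = 0) \<longrightarrow> b = 0"
    and st: "s \<in> T sc 2" "t \<in> T sc 2"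
    and eq: "\<And>c d. tmul sc 2 s (etens sc [c,d]) = tmul sc 2 t (etens sc [c,d])"
  shows "s = t"
proof -
  obtain ps qs where pq: "s = tens2 sc ps" "t = tens2 sc qs" using st unfolding in_T_2_iff by blast
  have mult: "(\<Sum>(a,b)\<leftarrow>ps. \<phi> (a*c) * \<psi> (b*d)) = (\<Sum>(a,b)\<leftarrow>qs. \<phi> (a*c) * \<psi> (b*d))"
    if "lin_fun sc \<phi>" "lin_fun sc \<psi>" for \<phi> \<psi> c d
    using arg_cong[OF eq[of c d], of "\<lambda>t. t [\<phi>,\<psi>]"]
    by (simp add: pq tmul_tens2_etens[OF alg] tens2_apply[OF that] case_prod_unfold comp_def)
  have first: "(\<Sum>(a,b)\<leftarrow>ps. \<phi> a * \<psi> (b*d)) = (\<Sum>(a,b)\<leftarrow>qs. \<phi> a * \<psi> (b*d))"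
    if "lin_fun sc \<phi>" "lin_fun sc \<psi>" for \<phi> \<psi> d
  proof -
    have "(\<Sum>(a,k)\<leftarrow>map (\<lambda>(a,b). (a, \<psi> (b*d))) ps. k * \<phi> a)
        = (\<Sum>(a,k)\<leftarrow>map (\<lambda>(a,b). (a, \<psi> (b*d))) qs. k * \<phi> a)"
    proof (rule lin_fun_cancel_right[OF alg nd _ that(1)])
      fix c \<phi>' assume "lin_fun sc \<phi>'"
      from mult[OF this that(2), of c d]
      show "(\<Sum>(a,k)\<leftarrow>map (\<lambda>(a,b). (a, \<psi> (b*d))) ps. k * \<phi>' (a*c))
          = (\<Sum>(a,k)\<leftarrow>map (\<lambda>(a,b). (a, \<psi> (b*d))) qs. k * \<phi>' (a*c))"
        by (simp add: comp_def case_prod_unfold mult.commute)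
    qed
    then show ?thesis by (simp add: comp_def case_prod_unfold mult.commute)
  qed
  show ?thesis unfolding pq
  proof (rule tens2_eqI)
    fix \<phi> \<psi> assume "lin_fun sc \<phi>" "lin_fun sc \<psi>"
    have "(\<Sum>(b,k)\<leftarrow>map (\<lambda>(a,b). (b, \<phi> a)) ps. k * \<psi> b)
        = (\<Sum>(b,k)\<leftarrow>map (\<lambda>(a,b). (b, \<phi> a)) qs. k * \<psi> b)"
    proof (rule lin_fun_cancel_right[OF alg nd _ \<open>lin_fun sc \<psi>\<close>])
      fix d \<psi>' assume "lin_fun sc \<psi>'"
      from first[OF \<open>lin_fun sc \<phi>\<close> this, of d]
      show "(\<Sum>(b,k)\<leftarrow>map (\<lambda>(a,b). (b, \<phi> a)) ps. k * \<psi>' (b*d))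
          = (\<Sum>(b,k)\<leftarrow>map (\<lambda>(a,b). (b, \<phi> a)) qs. k * \<psi>' (b*d))"
        by (simp add: comp_def case_prod_unfold)
    qed
    then show "(\<Sum>(a,b)\<leftarrow>ps. \<phi> a * \<psi> b) = (\<Sum>(a,b)\<leftarrow>qs. \<phi> a * \<psi> b)"
      by (simp add: comp_def case_prod_unfold)
  qed
qed

lemma tens2_cancel_left:
  fixes sc :: "'k::field \<Rightarrow> 'a::ring \<Rightarrow> 'a"
  assumes alg: "algebra_over sc" and nd: "\<forall>b::'a. (\<forall>a. a * b = 0) \<longrightarrow> b = 0"
    and st: "s \<in> T sc 2" "t \<in> T sc 2"
    and eq: "\<And>c d. tmul sc 2 (etens sc [c,d]) s = tmul sc 2 (etens sc [c,d]) t"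
  shows "s = t"
proof -
  obtain ps qs where pq: "s = tens2 sc ps" "t = tens2 sc qs" using st unfolding in_T_2_iff by blast
  have mult: "(\<Sum>(a,b)\<leftarrow>ps. \<phi> (c*a) * \<psi> (d*b)) = (\<Sum>(a,b)\<leftarrow>qs. \<phi> (c*a) * \<psi> (d*b))"
    if "lin_fun sc \<phi>" "lin_fun sc \<psi>" for \<phi> \<psi> c d
    using arg_cong[OF eq[of c d], of "\<lambda>t. t [\<phi>,\<psi>]"]
    by (simp add: pq tmul_etens_tens2[OF alg] tens2_apply[OF that] case_prod_unfold comp_def)
  have first: "(\<Sum>(a,b)\<leftarrow>ps. \<phi> a * \<psi> (d*b)) = (\<Sum>(a,b)\<leftarrow>qs. \<phi> a * \<psi> (d*b))"
    if "lin_fun sc \<phi>" "lin_fun sc \<psi>" for \<phi> \<psi> d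
  proof -
    have "(\<Sum>(a,k)\<leftarrow>map (\<lambda>(a,b). (a, \<psi> (d*b))) ps. k * \<phi> a)
        = (\<Sum>(a,k)\<leftarrow>map (\<lambda>(a,b). (a, \<psi> (d*b))) qs. k * \<phi> a)"
    proof (rule lin_fun_cancel_left[OF alg nd _ that(1)])
      fix c \<phi>' assume "lin_fun sc \<phi>'"
      from mult[OF this that(2), of c d]
      show "(\<Sum>(a,k)\<leftarrow>map (\<lambda>(a,b). (a, \<psi> (d*b))) ps. k * \<phi>' (c*a))
          = (\<Sum>(a,k)\<leftarrow>map (\<lambda>(a,b). (a, \<psi> (d*b))) qs. k * \<phi>' (c*a))"
        by (simp add: comp_def case_prod_unfold mult.commute)
    qed
    then show ?thesis by (simp add: comp_def case_prod_unfold mult.commute)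
  qed
  show ?thesis unfolding pq
  proof (rule tens2_eqI)
    fix \<phi> \<psi> assume "lin_fun sc \<phi>" "lin_fun sc \<psi>"
    have "(\<Sum>(b,k)\<leftarrow>map (\<lambda>(a,b). (b, \<phi> a)) ps. k * \<psi> b)
        = (\<Sum>(b,k)\<leftarrow>map (\<lambda>(a,b). (b, \<phi> a)) qs. k * \<psi> b)"
    proof (rule lin_fun_cancel_left[OF alg nd _ \<open>lin_fun sc \<psi>\<close>])
      fix d \<psi>' assume "lin_fun sc \<psi>'"
      from first[OF \<open>lin_fun sc \<phi>\<close> this, of d]
      show "(\<Sum>(b,k)\<leftarrow>map (\<lambda>(a,b). (b, \<phi> a)) ps. k * \<psi>' (d*b))
          = (\<Sum>(b,k)\<leftarrow>map (\<lambda>(a,b). (b, \<phi> a)) qs. k * \<psi>' (d*b))"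
        by (simp add: comp_def case_prod_unfold)
    qed
    then show "(\<Sum>(a,b)\<leftarrow>ps. \<phi> a * \<psi> b) = (\<Sum>(a,b)\<leftarrow>qs. \<phi> a * \<psi> b)"
      by (simp add: comp_def case_prod_unfold)
  qed
qed

section \<open>Multipliers of \<open>A \<otimes> A\<close>\<close>

lemma M2_closed: "m \<in> M sc 2 \<Longrightarrow> x \<in> T sc 2 \<Longrightarrow> fst m x \<in> T sc 2 \<and> snd m x \<in> T sc 2"
  unfolding M_def by auto

lemma M2_mult: "m \<in> M sc 2 \<Longrightarrow> x \<in> T sc 2 \<Longrightarrow> y \<in> T sc 2 \<Longrightarrow>
   tmul sc 2 x (fst m y) = tmul sc 2 (snd m x) y"
  unfolding M_def by auto

lemma M2_add:
  assumes "m \<in> M sc 2" "x \<in> T sc 2" "y \<in> T sc 2"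
  shows "fst m (x + y) = fst m x + fst m y \<and> snd m (x + y) = snd m x + snd m y"
proof -
  obtain L R where m: "m = (L,R)" by (cases m)
  have "L (tscale 1 x + y) = tscale 1 (L x) + L y \<and> R (tscale 1 x + y) = tscale 1 (R x) + R y"
    using assms unfolding M_def m by blast
  then show ?thesis using m by (simp add: tscale_def)
qed

lemma M2_zero: "m \<in> M sc 2 \<Longrightarrow> fst m 0 = 0 \<and> snd m 0 = 0"
  using M2_add[OF _ zero_in_T_2 zero_in_T_2, of m sc] by simp

lemma M2_tscale:
  assumes "m \<in> M sc 2" "x \<in> T sc 2"
  shows "fst m (tscale c x) = tscale c (fst m x) \<and> snd m (tscale c x) = tscale c (snd m x)"
proof -
  obtain L R where m: "m = (L,R)" by (cases m)
  have "L (tscale c x + 0) = tscale c (L x) + L 0 \<and> R (tscale c x + 0) = tscale c (R x) + R 0"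
    using assms zero_in_T_2 unfolding M_def m by blast
  then show ?thesis using M2_zero[OF assms(1)] m by simp
qed

lemma M2_fst_tmul:
  fixes sc :: "'k::field \<Rightarrow> 'a::ring \<Rightarrow> 'a"
  assumes alg: "algebra_over sc" and nd: "\<forall>b::'a. (\<forall>a. a * b = 0) \<longrightarrow> b = 0"
    and m: "m \<in> M sc 2" and t: "t \<in> T sc 2" and x: "x \<in> T sc 2"
  shows "fst m (tmul sc 2 t x) = tmul sc 2 (fst m t) x"
proof (rule tens2_cancel_left[OF alg nd])
  show "fst m (tmul sc 2 t x) \<in> T sc 2" "tmul sc 2 (fst m t) x \<in> T sc 2"
    using M2_closed[OF m] tmul_in_T_2[OF alg] t x by blast+
  fix c d
  let ?z = "etens sc [c,d]"
  have "tmul sc 2 ?z (fst m (tmul sc 2 t x)) = tmul sc 2 (snd m ?z) (tmul sc 2 t x)"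
    using M2_mult[OF m etens_in_T_2 tmul_in_T_2[OF alg t x]] .
  also have "\<dots> = tmul sc 2 (tmul sc 2 (snd m ?z) t) x"
    using tmul_assoc2[OF alg _ t x] M2_closed[OF m etens_in_T_2] by simp
  also have "\<dots> = tmul sc 2 (tmul sc 2 ?z (fst m t)) x"
    using M2_mult[OF m etens_in_T_2 t] by simp
  also have "\<dots> = tmul sc 2 ?z (tmul sc 2 (fst m t) x)"
    using tmul_assoc2[OF alg etens_in_T_2 _ x] M2_closed[OF m t] by simp
  finally show "tmul sc 2 ?z (fst m (tmul sc 2 t x)) = tmul sc 2 ?z (tmul sc 2 (fst m t) x)" .
qed

lemma M2_snd_tmul:
  fixes sc :: "'k::field \<Rightarrow> 'a::ring \<Rightarrow> 'a"
  assumes alg: "algebra_over sc" and nd: "\<forall>b::'a. (\<forall>a. b * a = 0) \<longrightarrow> b = 0"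
    and m: "m \<in> M sc 2" and x: "x \<in> T sc 2" and t: "t \<in> T sc 2"
  shows "snd m (tmul sc 2 x t) = tmul sc 2 x (snd m t)"
proof (rule tens2_cancel_right[OF alg nd])
  show "snd m (tmul sc 2 x t) \<in> T sc 2" "tmul sc 2 x (snd m t) \<in> T sc 2"
    using M2_closed[OF m] tmul_in_T_2[OF alg] t x by blast+
  fix c d
  let ?z = "etens sc [c,d]"
  have "tmul sc 2 (snd m (tmul sc 2 x t)) ?z = tmul sc 2 (tmul sc 2 x t) (fst m ?z)"
    using M2_mult[OF m tmul_in_T_2[OF alg x t] etens_in_T_2] by simp
  also have "\<dots> = tmul sc 2 x (tmul sc 2 t (fst m ?z))"
    using tmul_assoc2[OF alg x t] M2_closed[OF m etens_in_T_2] by simp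
  also have "\<dots> = tmul sc 2 x (tmul sc 2 (snd m t) ?z)"
    using M2_mult[OF m t etens_in_T_2] by simp
  also have "\<dots> = tmul sc 2 (tmul sc 2 x (snd m t)) ?z"
    using tmul_assoc2[OF alg x _ etens_in_T_2] M2_closed[OF m t] by simp
  finally show "tmul sc 2 (snd m (tmul sc 2 x t)) ?z = tmul sc 2 (tmul sc 2 x (snd m t)) ?z" .
qed

lemma tmul_emb_mmul_right:
  "emb sc 2 t = mmul sc 2 m m' \<Longrightarrow> x \<in> T sc 2 \<Longrightarrow> tmul sc 2 t x = fst m (fst m' x)"
  by (drule arg_cong[where f="\<lambda>m. fst m x"]) (simp add: emb_def mmul_def)

lemma tmul_emb_mmul_left:
  "emb sc 2 t = mmul sc 2 m m' \<Longrightarrow> x \<in> T sc 2 \<Longrightarrow> tmul sc 2 x t = snd m' (snd m x)"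
  by (drule arg_cong[where f="\<lambda>m. snd m x"]) (simp add: emb_def mmul_def)

lemma inT2_emb:
  fixes sc :: "'k::field \<Rightarrow> 'a::ring \<Rightarrow> 'a"
  assumes alg: "algebra_over sc" and nd: "\<forall>b::'a. (\<forall>a. b * a = 0) \<longrightarrow> b = 0"
    and m: "\<exists>t\<in>T sc 2. emb sc 2 t = m"
  shows "inT2 sc m \<in> T sc 2 \<and> emb sc 2 (inT2 sc m) = m"
proof -
  have unique: "s = t" if s: "s \<in> T sc 2" "emb sc 2 s = m" and t: "t \<in> T sc 2" "emb sc 2 t = m" for s t
  proof (rule tens2_cancel_right[OF alg nd s(1) t(1)])
    fix c d
    from arg_cong[OF trans[OF s(2) t(2)[symmetric]], of "\<lambda>m. fst m (etens sc [c,d])"]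
    show "tmul sc 2 s (etens sc [c,d]) = tmul sc 2 t (etens sc [c,d])"
      by (simp add: emb_def)
  qed
  obtain t where t: "t \<in> T sc 2" "emb sc 2 t = m" using m by blast
  have "inT2 sc m = t"
    unfolding inT2_def using unique t by (intro the_equality) auto
  then show ?thesis using t by simp
qed

lemma linear_pmulL: "algebra_over sc \<Longrightarrow> Vector_Spaces.linear sc sc (pmulL p)"
  by (cases p) (simp_all add: pmulL_def[abs_def] linear_id_algebra linear_mult_left)

lemma linear_pmulR: "algebra_over sc \<Longrightarrow> Vector_Spaces.linear sc sc (pmulR p)"
  by (cases p) (simp_all add: pmulR_def[abs_def] linear_id_algebra linear_mult_right)

lemma pm_fst_tens2:
  assumes "algebra_over sc"
  shows "fst (pm sc 2 [p,q]) (tens2 sc ps) = tens2 sc (map (\<lambda>(x,y). (pmulL p x, pmulL q y)) ps)"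
proof -
  obtain qs where qs: "rep sc 2 (tens2 sc ps) = map (\<lambda>(x,y). [x,y]) qs" "tens2 sc ps = tens2 sc qs"
    using rep_T_2[OF tens2_in_T_2] .
  have "fst (pm sc 2 [p,q]) (tens2 sc ps) = tsum sc (map (map2 pmulL [p,q]) (map (\<lambda>(x,y). [x,y]) qs))"
    by (simp add: pm_def qs(1))
  also have "\<dots> = tens2 sc (map (\<lambda>(x,y). (pmulL p x, pmulL q y)) qs)"
    by (simp add: tens2_def comp_def case_prod_unfold)
  also have "\<dots> = tens2 sc (map (\<lambda>(x,y). (pmulL p x, pmulL q y)) ps)"
    using tens2_map_cong[OF linear_pmulL[OF assms] linear_pmulL[OF assms] qs(2)[symmetric]] .
  finally show ?thesis .
qed

lemma pm_snd_tens2: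
  assumes "algebra_over sc"
  shows "snd (pm sc 2 [p,q]) (tens2 sc ps) = tens2 sc (map (\<lambda>(x,y). (pmulR p x, pmulR q y)) ps)"
proof -
  obtain qs where qs: "rep sc 2 (tens2 sc ps) = map (\<lambda>(x,y). [x,y]) qs" "tens2 sc ps = tens2 sc qs"
    using rep_T_2[OF tens2_in_T_2] .
  have "snd (pm sc 2 [p,q]) (tens2 sc ps) = tsum sc (map (map2 pmulR [p,q]) (map (\<lambda>(x,y). [x,y]) qs))"
    by (simp add: pm_def qs(1))
  also have "\<dots> = tens2 sc (map (\<lambda>(x,y). (pmulR p x, pmulR q y)) qs)"
    by (simp add: tens2_def comp_def case_prod_unfold)
  also have "\<dots> = tens2 sc (map (\<lambda>(x,y). (pmulR p x, pmulR q y)) ps)"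
    using tens2_map_cong[OF linear_pmulR[OF assms] linear_pmulR[OF assms] qs(2)[symmetric]] .
  finally show ?thesis .
qed

lemma pm_fst_etens:
  "algebra_over sc \<Longrightarrow> fst (pm sc 2 [p,q]) (etens sc [c,d]) = etens sc [pmulL p c, pmulL q d]"
  by (simp add: etens_pair pm_fst_tens2)

lemma pm_snd_etens:
  "algebra_over sc \<Longrightarrow> snd (pm sc 2 [p,q]) (etens sc [c,d]) = etens sc [pmulR p c, pmulR q d]"
  by (simp add: etens_pair pm_snd_tens2)

lemma pm_in_T_2:
  "algebra_over sc \<Longrightarrow> t \<in> T sc 2 \<Longrightarrow> fst (pm sc 2 [p,q]) t \<in> T sc 2 \<and> snd (pm sc 2 [p,q]) t \<in> T sc 2"
  unfolding in_T_2_iff by (auto simp: pm_fst_tens2 pm_snd_tens2)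

lemma pmulR_mult_left: "pmulR p (e * x) = e * pmulR p x"
  by (cases p) (simp_all add: pmulR_def mult.assoc)

lemma pmulL_mult_right: "pmulL p (x * e) = pmulL p x * e"
  by (cases p) (simp_all add: pmulL_def mult.assoc)

lemma pmulR_mult_pmulL: "pmulR p e * x = e * pmulL p x"
  by (cases p) (simp_all add: pmulR_def pmulL_def mult.assoc)

lemma tmul_etens_pm_snd:
  assumes "algebra_over sc" "t \<in> T sc 2"
  shows "tmul sc 2 (etens sc [e,f]) (snd (pm sc 2 [p,q]) t) = snd (pm sc 2 [p,q]) (tmul sc 2 (etens sc [e,f]) t)"
  using assms(2) unfolding in_T_2_iff
  by (auto simp: pm_snd_tens2[OF assms(1)] tmul_etens_tens2[OF assms(1)] pmulR_mult_left comp_def case_prod_unfold)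

lemma tmul_pm_fst_etens:
  assumes "algebra_over sc" "t \<in> T sc 2"
  shows "tmul sc 2 (fst (pm sc 2 [p,q]) t) (etens sc [e,f]) = fst (pm sc 2 [p,q]) (tmul sc 2 t (etens sc [e,f]))"
  using assms(2) unfolding in_T_2_iff
  by (auto simp: pm_fst_tens2[OF assms(1)] tmul_tens2_etens[OF assms(1)] pmulL_mult_right comp_def case_prod_unfold)

lemma tmul_etens_pm_fst:
  assumes "algebra_over sc" "t \<in> T sc 2"
  shows "tmul sc 2 (etens sc [e,f]) (fst (pm sc 2 [p,q]) t) = tmul sc 2 (etens sc [pmulR p e, pmulR q f]) t"
  using assms(2) unfolding in_T_2_iff
  by (auto simp: pm_fst_tens2[OF assms(1)] tmul_etens_tens2[OF assms(1)] pmulR_mult_pmulL comp_def case_prod_unfold)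

lemma tmul_pm_snd_etens:
  assumes "algebra_over sc" "t \<in> T sc 2"
  shows "tmul sc 2 (snd (pm sc 2 [p,q]) t) (etens sc [e,f]) = tmul sc 2 t (etens sc [pmulL p e, pmulL q f])"
  using assms(2) unfolding in_T_2_iff
  by (auto simp: pm_snd_tens2[OF assms(1)] tmul_tens2_etens[OF assms(1)] pmulR_mult_pmulL comp_def case_prod_unfold)

lemma epsid_pm_right:
  assumes "algebra_over sc" "lin_fun sc \<epsilon>" "t \<in> T sc 2"
  shows "epsid sc \<epsilon> (snd (pm sc 2 [None, Some c]) t) = epsid sc \<epsilon> t * c"
  using assms(3) unfolding in_T_2_iff
  by (auto simp: pm_snd_tens2[OF assms(1)] epsid_tens2[OF assms(1,2)] pmulR_def
      sum_list_mult_const[symmetric] scale_mult_left[OF assms(1)] comp_def case_prod_unfold)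

lemma epsid_pm_left:
  assumes "algebra_over sc" "lin_fun sc \<epsilon>" "t \<in> T sc 2"
  shows "epsid sc \<epsilon> (fst (pm sc 2 [None, Some b]) t) = b * epsid sc \<epsilon> t"
  using assms(3) unfolding in_T_2_iff
  by (auto simp: pm_fst_tens2[OF assms(1)] epsid_tens2[OF assms(1,2)] pmulL_def
      sum_list_const_mult[symmetric] scale_mult_right[OF assms(1)] comp_def case_prod_unfold)

lemma ideps_pm_left:
  assumes "algebra_over sc" "lin_fun sc \<epsilon>" "t \<in> T sc 2"
  shows "ideps sc \<epsilon> (fst (pm sc 2 [Some c, None]) t) = c * ideps sc \<epsilon> t"
  using assms(3) unfolding in_T_2_iff
  by (auto simp: pm_fst_tens2[OF assms(1)] ideps_tens2[OF assms(1,2)] pmulL_def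
      sum_list_const_mult[symmetric] scale_mult_right[OF assms(1)] comp_def case_prod_unfold)

lemma ideps_pm_right:
  assumes "algebra_over sc" "lin_fun sc \<epsilon>" "t \<in> T sc 2"
  shows "ideps sc \<epsilon> (snd (pm sc 2 [Some a, None]) t) = ideps sc \<epsilon> t * a"
  using assms(3) unfolding in_T_2_iff
  by (auto simp: pm_snd_tens2[OF assms(1)] ideps_tens2[OF assms(1,2)] pmulR_def
      sum_list_mult_const[symmetric] scale_mult_left[OF assms(1)] comp_def case_prod_unfold)

lemma epsid_add:
  assumes "algebra_over sc" "lin_fun sc \<epsilon>" "x \<in> T sc 2" "z \<in> T sc 2"
  shows "epsid sc \<epsilon> (x + z) = epsid sc \<epsilon> x + epsid sc \<epsilon> z"
  using assms(3,4) unfolding in_T_2_iff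
  by (auto simp: tens2_append[symmetric] epsid_tens2[OF assms(1,2)])

lemma ideps_add:
  assumes "algebra_over sc" "lin_fun sc \<epsilon>" "x \<in> T sc 2" "z \<in> T sc 2"
  shows "ideps sc \<epsilon> (x + z) = ideps sc \<epsilon> x + ideps sc \<epsilon> z"
  using assms(3,4) unfolding in_T_2_iff
  by (auto simp: tens2_append[symmetric] ideps_tens2[OF assms(1,2)])

lemma epsid_zero: "algebra_over sc \<Longrightarrow> lin_fun sc \<epsilon> \<Longrightarrow> epsid sc \<epsilon> 0 = 0"
  using epsid_tens2[of sc \<epsilon> "[]"] by (simp add: tens2_Nil)

lemma ideps_zero: "algebra_over sc \<Longrightarrow> lin_fun sc \<epsilon> \<Longrightarrow> ideps sc \<epsilon> 0 = 0"
  using ideps_tens2[of sc \<epsilon> "[]"] by (simp add: tens2_Nil)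

lemma sum_list_etens_additive:
  assumes F_T: "\<And>z. z \<in> T sc 2 \<Longrightarrow> F z \<in> T sc 2"
    and F_add: "\<And>x z. x \<in> T sc 2 \<Longrightarrow> z \<in> T sc 2 \<Longrightarrow> F (x + z) = F x + F z"
    and F_zero: "F 0 = 0"
    and G_add: "\<And>x z. x \<in> T sc 2 \<Longrightarrow> z \<in> T sc 2 \<Longrightarrow> G (x + z) = G x + G z"
    and G_zero: "G 0 = 0"
  shows "(\<Sum>(x,y)\<leftarrow>xys. G (F (etens sc [x,y]))) = G (F (tens2 sc xys))"
proof (induct xys)
  case Nil then show ?case by (simp only: list.map(1) sum_list.Nil tens2_Nil F_zero G_zero)
next
  case (Cons p xys)
  obtain x y where p: "p = (x,y)" by (cases p)
  have split: "tens2 sc (p # xys) = etens sc [x,y] + tens2 sc xys"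
    using tens2_append[of sc "[(x,y)]" xys] by (simp add: p etens_pair)
  have "(\<Sum>(x,y)\<leftarrow>p # xys. G (F (etens sc [x,y]))) = G (F (etens sc [x,y])) + G (F (tens2 sc xys))"
    using Cons by (simp add: p)
  also have "\<dots> = G (F (etens sc [x,y]) + F (tens2 sc xys))"
    by (rule G_add[OF F_T[OF etens_in_T_2] F_T[OF tens2_in_T_2], symmetric])
  also have "\<dots> = G (F (tens2 sc (p # xys)))"
    by (simp only: split F_add[OF etens_in_T_2 tens2_in_T_2])
  finally show ?case .
qed

lemma tspan_base: "s \<in> S \<Longrightarrow> s \<in> tspan S"
  unfolding tspan_def by (intro CollectI exI[of _ "[(1,s)]"]) (simp add: tscale_def)

lemma tspan_fixed:
  assumes alg: "algebra_over sc" and m: "m \<in> M sc 2" and f: "f = fst m \<or> f = snd m"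
    and idem: "\<And>z. z \<in> T sc 2 \<Longrightarrow> f (f z) = f z"
    and y: "y \<in> tspan {f (etens sc [b,b']) | b b'. True}"
  shows "y \<in> T sc 2 \<and> f y = y"
proof -
  have f_T: "f z \<in> T sc 2" if "z \<in> T sc 2" for z using f M2_closed[OF m that] by auto
  have f_add: "f (x + z) = f x + f z" if "x \<in> T sc 2" "z \<in> T sc 2" for x z
    using f M2_add[OF m that] by auto
  have f_scale: "f (tscale c x) = tscale c (f x)" if "x \<in> T sc 2" for x c
    using f M2_tscale[OF m that] by auto
  have f_zero: "f 0 = 0" using f M2_zero[OF m] by auto
  obtain cs where cs: "set (map snd cs) \<subseteq> {f (etens sc [b,b']) | b b'. True}"
      "y = (\<Sum>(c,s)\<leftarrow>cs. tscale c s)"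
    using y unfolding tspan_def by blast
  from cs(1) have "(\<Sum>(c,s)\<leftarrow>cs. tscale c s) \<in> T sc 2
    \<and> f (\<Sum>(c,s)\<leftarrow>cs. tscale c s) = (\<Sum>(c,s)\<leftarrow>cs. tscale c s)"
  proof (induct cs)
    case Nil then show ?case by (simp only: list.map(1) sum_list.Nil zero_in_T_2 f_zero simp_thms)
  next
    case (Cons p cs)
    obtain c s where p: "p = (c,s)" by (cases p)
    from Cons.prems p obtain b b' where s: "s = f (etens sc [b,b'])" by auto
    have s_T: "s \<in> T sc 2" and s_fixed: "f s = s" using s f_T idem by auto
    let ?R = "\<Sum>(c,s)\<leftarrow>cs. tscale c s"
    have R: "?R \<in> T sc 2" "f ?R = ?R" using Cons by auto
    have "(\<Sum>(c,s)\<leftarrow>p # cs. tscale c s) = tscale c s + ?R"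
      by (simp add: p)
    moreover have "tscale c s + ?R \<in> T sc 2"
      using add_in_T_2[OF tscale_in_T_2[OF alg s_T] R(1)] .
    moreover have "f (tscale c s + ?R) = tscale c s + ?R"
      by (simp only: f_add[OF tscale_in_T_2[OF alg s_T] R(1)] f_scale[OF s_T] s_fixed R(2))
    ultimately show ?case by (simp only:)
  qed
  then show ?thesis using cs(2) by simp
qed

section \<open>Regular weak multiplier bialgebras\<close>

locale regular_weak_multiplier_bialgebra =
  fixes sc :: "'k::field \<Rightarrow> 'a::ring \<Rightarrow> 'a"
    and E :: "('a,'k) mlt" and \<Delta> :: "'a \<Rightarrow> ('a,'k) mlt" and \<epsilon> :: "'a \<Rightarrow> 'k"
  assumes regular: "regular_wmba sc E \<Delta> \<epsilon>"
begin

lemma wmba_axioms: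
  shows algebra: "algebra_over sc"
    and nondeg_left: "\<forall>b::'a. (\<forall>a. a * b = 0) \<longrightarrow> b = 0"
    and nondeg_right: "\<forall>b::'a. (\<forall>a. b * a = 0) \<longrightarrow> b = 0"
    and E_M2: "E \<in> M sc 2"
    and E_idem: "mmul sc 2 E E = E"
    and eps_affine: "\<forall>c a b. \<epsilon> (sc c a + b) = c * \<epsilon> a + \<epsilon> b"
    and T1_exists: "\<forall>a b. \<exists>t\<in>T sc 2. emb sc 2 t = mmul sc 2 (\<Delta> a) (pm sc 2 [None, Some b])"
    and T2_exists: "\<forall>a b. \<exists>t\<in>T sc 2. emb sc 2 t = mmul sc 2 (pm sc 2 [Some a, None]) (\<Delta> b)"
    and T3_exists: "\<forall>a b. \<exists>t\<in>T sc 2. emb sc 2 t = mmul sc 2 (pm sc 2 [None, Some b]) (\<Delta> a)"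
    and T4_exists: "\<forall>a b. \<exists>t\<in>T sc 2. emb sc 2 t = mmul sc 2 (\<Delta> b) (pm sc 2 [Some a, None])"
    and counit_T1: "\<forall>a b. epsid sc \<epsilon> (T1 sc \<Delta> a b) = a * b"
    and counit_T2: "\<forall>a b. ideps sc \<epsilon> (T2 sc \<Delta> a b) = a * b"
    and span_fst: "tspan {fst (\<Delta> a) (etens sc [b, b']) | a b b'. True} = tspan {fst E (etens sc [b, b']) | b b'. True}"
    and span_snd: "tspan {snd (\<Delta> a) (etens sc [b, b']) | a b b'. True} = tspan {snd E (etens sc [b, b']) | b b'. True}"
  by (insert regular[unfolded regular_wmba_def wmba_def], elim conjE, assumption)+

lemma lin_fun_eps: "lin_fun sc \<epsilon>"
  by (rule lin_funI[OF algebra eps_affine])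

lemma T1_spec: "T1 sc \<Delta> a b \<in> T sc 2 \<and> emb sc 2 (T1 sc \<Delta> a b) = mmul sc 2 (\<Delta> a) (pm sc 2 [None, Some b])"
  unfolding T1_def using inT2_emb[OF algebra nondeg_right] T1_exists by blast

lemma T2_spec: "T2 sc \<Delta> a b \<in> T sc 2 \<and> emb sc 2 (T2 sc \<Delta> a b) = mmul sc 2 (pm sc 2 [Some a, None]) (\<Delta> b)"
  unfolding T2_def using inT2_emb[OF algebra nondeg_right] T2_exists by blast

lemma T3_spec: "T3 sc \<Delta> a b \<in> T sc 2 \<and> emb sc 2 (T3 sc \<Delta> a b) = mmul sc 2 (pm sc 2 [None, Some b]) (\<Delta> a)"
  unfolding T3_def using inT2_emb[OF algebra nondeg_right] T3_exists by blast

lemma T4_spec: "T4 sc \<Delta> a b \<in> T sc 2 \<and> emb sc 2 (T4 sc \<Delta> a b) = mmul sc 2 (\<Delta> b) (pm sc 2 [Some a, None])"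
  unfolding T4_def using inT2_emb[OF algebra nondeg_right] T4_exists by blast

lemma T1_tmul_etens: "tmul sc 2 (T1 sc \<Delta> a b) (etens sc [c,d]) = fst (\<Delta> a) (etens sc [c, b*d])"
  using tmul_emb_mmul_right[OF conjunct2[OF T1_spec] etens_in_T_2] by (simp add: pm_fst_etens[OF algebra] pmulL_def)

lemma etens_tmul_T1:
  "tmul sc 2 (etens sc [c,d]) (T1 sc \<Delta> a b) = snd (pm sc 2 [None, Some b]) (snd (\<Delta> a) (etens sc [c,d]))"
  using tmul_emb_mmul_left[OF conjunct2[OF T1_spec] etens_in_T_2] .

lemma etens_tmul_T2: "tmul sc 2 (etens sc [c,d]) (T2 sc \<Delta> a b) = snd (\<Delta> b) (etens sc [c*a, d])"
  using tmul_emb_mmul_left[OF conjunct2[OF T2_spec] etens_in_T_2] by (simp add: pm_snd_etens[OF algebra] pmulR_def)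

lemma T2_tmul_etens:
  "tmul sc 2 (T2 sc \<Delta> a b) (etens sc [c,d]) = fst (pm sc 2 [Some a, None]) (fst (\<Delta> b) (etens sc [c,d]))"
  using tmul_emb_mmul_right[OF conjunct2[OF T2_spec] etens_in_T_2] .

lemma etens_tmul_T3: "tmul sc 2 (etens sc [c,d]) (T3 sc \<Delta> a b) = snd (\<Delta> a) (etens sc [c, d*b])"
  using tmul_emb_mmul_left[OF conjunct2[OF T3_spec] etens_in_T_2] by (simp add: pm_snd_etens[OF algebra] pmulR_def)

lemma T4_tmul_etens: "tmul sc 2 (T4 sc \<Delta> a b) (etens sc [c,d]) = fst (\<Delta> b) (etens sc [a*c, d])"
  using tmul_emb_mmul_right[OF conjunct2[OF T4_spec] etens_in_T_2] by (simp add: pm_fst_etens[OF algebra] pmulL_def)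

lemma E_fst_idem: "z \<in> T sc 2 \<Longrightarrow> fst E (fst E z) = fst E z"
  using arg_cong[OF E_idem, of "\<lambda>m. fst m z"] by (simp add: mmul_def)

lemma E_snd_idem: "z \<in> T sc 2 \<Longrightarrow> snd E (snd E z) = snd E z"
  using arg_cong[OF E_idem, of "\<lambda>m. snd m z"] by (simp add: mmul_def)

lemma E_fst_fixed:
  assumes t: "t \<in> T sc 2" and range: "\<And>c d. \<exists>a b b'. tmul sc 2 t (etens sc [c,d]) = fst (\<Delta> a) (etens sc [b,b'])"
  shows "fst E t = t"
proof (rule tens2_cancel_right[OF algebra nondeg_right])
  \<comment> \<open>by axiom (iv) each \<open>t (c \<otimes> d)\<close> lies in the span of the range of \<open>E\<close>, which \<open>E\<close> fixes\<close>
  show "fst E t \<in> T sc 2" "t \<in> T sc 2" using M2_closed[OF E_M2 t] t by blast+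
  fix c d
  obtain a b b' where eq: "tmul sc 2 t (etens sc [c,d]) = fst (\<Delta> a) (etens sc [b,b'])"
    using range by blast
  have "tmul sc 2 t (etens sc [c,d]) \<in> tspan {fst E (etens sc [b, b']) | b b'. True}"
    unfolding span_fst[symmetric] eq by (rule tspan_base) blast
  then have "fst E (tmul sc 2 t (etens sc [c,d])) = tmul sc 2 t (etens sc [c,d])"
    using tspan_fixed[OF algebra E_M2 disjI1[OF refl] E_fst_idem] by blast
  then show "tmul sc 2 (fst E t) (etens sc [c,d]) = tmul sc 2 t (etens sc [c,d])"
    using M2_fst_tmul[OF algebra nondeg_left E_M2 t etens_in_T_2] by simp
qed

lemma E_snd_fixed:
  assumes t: "t \<in> T sc 2" and range: "\<And>c d. \<exists>a b b'. tmul sc 2 (etens sc [c,d]) t = snd (\<Delta> a) (etens sc [b,b'])"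
  shows "snd E t = t"
proof (rule tens2_cancel_left[OF algebra nondeg_left])
  show "snd E t \<in> T sc 2" "t \<in> T sc 2" using M2_closed[OF E_M2 t] t by blast+
  fix c d
  obtain a b b' where eq: "tmul sc 2 (etens sc [c,d]) t = snd (\<Delta> a) (etens sc [b,b'])"
    using range by blast
  have "tmul sc 2 (etens sc [c,d]) t \<in> tspan {snd E (etens sc [b, b']) | b b'. True}"
    unfolding span_snd[symmetric] eq by (rule tspan_base) blast
  then have "snd E (tmul sc 2 (etens sc [c,d]) t) = tmul sc 2 (etens sc [c,d]) t"
    using tspan_fixed[OF algebra E_M2 disjI2[OF refl] E_snd_idem] by blast
  then show "tmul sc 2 (etens sc [c,d]) (snd E t) = tmul sc 2 (etens sc [c,d]) t"
    using M2_snd_tmul[OF algebra nondeg_right E_M2 etens_in_T_2 t] by simp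
qed

lemma E_T1: "fst E (T1 sc \<Delta> a b) = T1 sc \<Delta> a b"
  using T1_spec by (intro E_fst_fixed exI) (auto simp: T1_tmul_etens)

lemma T2_E: "snd E (T2 sc \<Delta> a b) = T2 sc \<Delta> a b"
  using T2_spec by (intro E_snd_fixed exI) (auto simp: etens_tmul_T2)

lemma T3_E: "snd E (T3 sc \<Delta> a b) = T3 sc \<Delta> a b"
  using T3_spec by (intro E_snd_fixed exI) (auto simp: etens_tmul_T3)

lemma E_T4: "fst E (T4 sc \<Delta> a b) = T4 sc \<Delta> a b"
  using T4_spec by (intro E_fst_fixed exI) (auto simp: T4_tmul_etens)

lemma T3_mult_right:
  "snd (pm sc 2 [None, Some c]) (T3 sc \<Delta> a b) = fst (pm sc 2 [None, Some b]) (T1 sc \<Delta> a c)"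
proof (rule tens2_cancel_left[OF algebra nondeg_left])
  show "snd (pm sc 2 [None, Some c]) (T3 sc \<Delta> a b) \<in> T sc 2"
    "fst (pm sc 2 [None, Some b]) (T1 sc \<Delta> a c) \<in> T sc 2"
    using pm_in_T_2[OF algebra] T1_spec T3_spec by blast+
  fix e f
  have "tmul sc 2 (etens sc [e,f]) (snd (pm sc 2 [None, Some c]) (T3 sc \<Delta> a b))
      = snd (pm sc 2 [None, Some c]) (snd (\<Delta> a) (etens sc [e, f*b]))"
    using T3_spec by (simp add: tmul_etens_pm_snd[OF algebra] etens_tmul_T3)
  also have "\<dots> = tmul sc 2 (etens sc [e,f]) (fst (pm sc 2 [None, Some b]) (T1 sc \<Delta> a c))"
    using T1_spec by (simp add: tmul_etens_pm_fst[OF algebra] etens_tmul_T1 pmulR_def)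
  finally show "tmul sc 2 (etens sc [e,f]) (snd (pm sc 2 [None, Some c]) (T3 sc \<Delta> a b))
      = tmul sc 2 (etens sc [e,f]) (fst (pm sc 2 [None, Some b]) (T1 sc \<Delta> a c))" .
qed

lemma T4_mult_left:
  "fst (pm sc 2 [Some c, None]) (T4 sc \<Delta> a b) = snd (pm sc 2 [Some a, None]) (T2 sc \<Delta> c b)"
proof (rule tens2_cancel_right[OF algebra nondeg_right])
  show "fst (pm sc 2 [Some c, None]) (T4 sc \<Delta> a b) \<in> T sc 2"
    "snd (pm sc 2 [Some a, None]) (T2 sc \<Delta> c b) \<in> T sc 2"
    using pm_in_T_2[OF algebra] T2_spec T4_spec by blast+
  fix e f
  have "tmul sc 2 (fst (pm sc 2 [Some c, None]) (T4 sc \<Delta> a b)) (etens sc [e,f])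
      = fst (pm sc 2 [Some c, None]) (fst (\<Delta> b) (etens sc [a*e, f]))"
    using T4_spec by (simp add: tmul_pm_fst_etens[OF algebra] T4_tmul_etens)
  also have "\<dots> = tmul sc 2 (snd (pm sc 2 [Some a, None]) (T2 sc \<Delta> c b)) (etens sc [e,f])"
    using T2_spec by (simp add: tmul_pm_snd_etens[OF algebra] T2_tmul_etens pmulL_def)
  finally show "tmul sc 2 (fst (pm sc 2 [Some c, None]) (T4 sc \<Delta> a b)) (etens sc [e,f])
      = tmul sc 2 (snd (pm sc 2 [Some a, None]) (T2 sc \<Delta> c b)) (etens sc [e,f])" .
qed

lemma counit_T3: "epsid sc \<epsilon> (T3 sc \<Delta> a b) = b * a"
proof -
  have "epsid sc \<epsilon> (T3 sc \<Delta> a b) * c = (b * a) * c" for c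
  proof -
    have "epsid sc \<epsilon> (T3 sc \<Delta> a b) * c = epsid sc \<epsilon> (snd (pm sc 2 [None, Some c]) (T3 sc \<Delta> a b))"
      using T3_spec by (simp add: epsid_pm_right[OF algebra lin_fun_eps])
    also have "\<dots> = b * epsid sc \<epsilon> (T1 sc \<Delta> a c)"
      using T1_spec by (simp add: T3_mult_right epsid_pm_left[OF algebra lin_fun_eps])
    finally show ?thesis using counit_T1 by (simp add: mult.assoc)
  qed
  then have "\<forall>c. (epsid sc \<epsilon> (T3 sc \<Delta> a b) - b * a) * c = 0"
    by (simp add: left_diff_distrib)
  then show ?thesis using nondeg_right by auto
qed

lemma counit_T4: "ideps sc \<epsilon> (T4 sc \<Delta> a b) = b * a"
proof -
  have "c * ideps sc \<epsilon> (T4 sc \<Delta> a b) = c * (b * a)" for c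
  proof -
    have "c * ideps sc \<epsilon> (T4 sc \<Delta> a b) = ideps sc \<epsilon> (fst (pm sc 2 [Some c, None]) (T4 sc \<Delta> a b))"
      using T4_spec by (simp add: ideps_pm_left[OF algebra lin_fun_eps])
    also have "\<dots> = ideps sc \<epsilon> (T2 sc \<Delta> c b) * a"
      using T2_spec by (simp add: T4_mult_left ideps_pm_right[OF algebra lin_fun_eps])
    finally show ?thesis using counit_T2 by (simp add: mult.assoc)
  qed
  then have "\<forall>c. c * (ideps sc \<epsilon> (T4 sc \<Delta> a b) - b * a) = 0"
    by (simp add: right_diff_distrib)
  then show ?thesis using nondeg_left by auto
qed

lemmas sum_epsid_E_etens =
  sum_list_etens_additive[OF conjunct1[OF M2_closed[OF E_M2]] conjunct1[OF M2_add[OF E_M2]]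
    conjunct1[OF M2_zero[OF E_M2]] epsid_add[OF algebra lin_fun_eps] epsid_zero[OF algebra lin_fun_eps]]
  sum_list_etens_additive[OF conjunct2[OF M2_closed[OF E_M2]] conjunct2[OF M2_add[OF E_M2]]
    conjunct2[OF M2_zero[OF E_M2]] epsid_add[OF algebra lin_fun_eps] epsid_zero[OF algebra lin_fun_eps]]

lemmas sum_ideps_E_etens =
  sum_list_etens_additive[OF conjunct1[OF M2_closed[OF E_M2]] conjunct1[OF M2_add[OF E_M2]]
    conjunct1[OF M2_zero[OF E_M2]] ideps_add[OF algebra lin_fun_eps] ideps_zero[OF algebra lin_fun_eps]]
  sum_list_etens_additive[OF conjunct2[OF M2_closed[OF E_M2]] conjunct2[OF M2_add[OF E_M2]]
    conjunct2[OF M2_zero[OF E_M2]] ideps_add[OF algebra lin_fun_eps] ideps_zero[OF algebra lin_fun_eps]]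

lemma sum_piLbar_T3:
  assumes "T3 sc \<Delta> a b = tens2 sc xys"
  shows "(\<Sum>(x,y)\<leftarrow>xys. snd (piLbar sc E \<Delta> \<epsilon> x) y) = b * a"
proof -
  have "(\<Sum>(x,y)\<leftarrow>xys. snd (piLbar sc E \<Delta> \<epsilon> x) y) = epsid sc \<epsilon> (snd E (tens2 sc xys))"
    using sum_epsid_E_etens(2)[of xys] by (simp add: piLbar_def)
  also have "\<dots> = b * a" using assms[symmetric] T3_E counit_T3 by simp
  finally show ?thesis .
qed

lemma sum_piRbar_T4:
  assumes "T4 sc \<Delta> a b = tens2 sc xys"
  shows "(\<Sum>(x,y)\<leftarrow>xys. fst (piRbar sc E \<Delta> \<epsilon> y) x) = b * a"
proof -
  have "(\<Sum>(x,y)\<leftarrow>xys. fst (piRbar sc E \<Delta> \<epsilon> y) x) = ideps sc \<epsilon> (fst E (tens2 sc xys))"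
    using sum_ideps_E_etens(1)[of xys] by (simp add: piRbar_def)
  also have "\<dots> = b * a" using assms[symmetric] E_T4 counit_T4 by simp
  finally show ?thesis .
qed

lemma sum_piL_T1:
  assumes "T1 sc \<Delta> a b = tens2 sc xys"
  shows "(\<Sum>(x,y)\<leftarrow>xys. fst (piL sc E \<Delta> \<epsilon> x) y) = a * b"
proof -
  have "(\<Sum>(x,y)\<leftarrow>xys. fst (piL sc E \<Delta> \<epsilon> x) y) = epsid sc \<epsilon> (fst E (tens2 sc xys))"
    using sum_epsid_E_etens(1)[of xys] by (simp add: piL_def)
  also have "\<dots> = a * b" using assms[symmetric] E_T1 counit_T1 by simp
  finally show ?thesis .
qed

lemma sum_piR_T2:
  assumes "T2 sc \<Delta> a b = tens2 sc xys"
  shows "(\<Sum>(x,y)\<leftarrow>xys. snd (piR sc E \<Delta> \<epsilon> y) x) = a * b"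
proof -
  have "(\<Sum>(x,y)\<leftarrow>xys. snd (piR sc E \<Delta> \<epsilon> y) x) = ideps sc \<epsilon> (snd E (tens2 sc xys))"
    using sum_ideps_E_etens(2)[of xys] by (simp add: piR_def)
  also have "\<dots> = a * b" using assms[symmetric] T2_E counit_T2 by simp
  finally show ?thesis .
qed

end

theorem lemma3p7:
  fixes sc :: "'k::field \<Rightarrow> 'a::ring \<Rightarrow> 'a"
    and E :: "('a,'k) mlt" and \<Delta> :: "'a \<Rightarrow> ('a,'k) mlt" and \<epsilon> :: "'a \<Rightarrow> 'k"
  assumes "regular_wmba sc E \<Delta> \<epsilon>"
  shows "(\<forall>a b xys. T3 sc \<Delta> a b = tsum sc (map (\<lambda>(x,y). [x, y]) xys) \<longrightarrow>
            sum_list (map (\<lambda>(x,y). snd (piLbar sc E \<Delta> \<epsilon> x) y) xys) = b * a)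
       \<and> (\<forall>a b xys. T4 sc \<Delta> a b = tsum sc (map (\<lambda>(x,y). [x, y]) xys) \<longrightarrow>
            sum_list (map (\<lambda>(x,y). fst (piRbar sc E \<Delta> \<epsilon> y) x) xys) = b * a)
       \<and> (\<forall>a b xys. T1 sc \<Delta> a b = tsum sc (map (\<lambda>(x,y). [x, y]) xys) \<longrightarrow>
            sum_list (map (\<lambda>(x,y). fst (piL sc E \<Delta> \<epsilon> x) y) xys) = a * b)
       \<and> (\<forall>a b xys. T2 sc \<Delta> a b = tsum sc (map (\<lambda>(x,y). [x, y]) xys) \<longrightarrow>
            sum_list (map (\<lambda>(x,y). snd (piR sc E \<Delta> \<epsilon> y) x) xys) = a * b)"
proof -
  interpret regular_weak_multiplier_bialgebra sc E \<Delta> \<epsilon> by unfold_locales (rule assms)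
  show ?thesis
    using sum_piLbar_T3 sum_piRbar_T4 sum_piL_T1 sum_piR_T2 unfolding tens2_def by blast
qed

end
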